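(* Let $[\mathrm{C}](\mathbf{x},\mathbf{y},\mathbf{z})=\mathcal{K}^{(m,N)}(\mathbf{x},\mathbf{y},\mathcal{M}_{[a]}(\mathbf{z}))$. There exist a constant $\alpha$ and a positive measurable function $\gamma:\mathbb{R}^{N_g}\times\mathbb{R}^\nu\to\mathbb{R}$ such that, for $\Gamma$-almost all $(\mathbf{y},\mathbf{z})\in\mathbb{R}^{N_g}\times\mathbb{R}^\nu$, $$0<\alpha\le\operatorname*{ess\,inf}_{\mathbf{x}\in D}\inf_{\mathbf{h}\in\mathbb{R}^n\setminus\{0\}}\frac{\langle[\mathrm{C}](\mathbf{x},\mathbf{y},\mathbf{z})\mathbf{h},\mathbf{h}\rangle_2}{\|\mathbf{h}\|_2^2},\qquad \operatorname*{ess\,sup}_{\mathbf{x}\in D}\sup_{\mathbf{h}\in\mathbb{R}^n\setminus\{0\}}\frac{\langle[\mathrm{C}](\mathbf{x},\mathbf{y},\mathbf{z})\mathbf{h},\mathbf{h}\rangle_2}{\|\mathbf{h}\|_2^2}\le\gamma(\mathbf{y},\mathbf{z})<\infty.$$ Moreover, for the class of random fields corresponding to the square type representation, $E_\Gamma(\gamma)\le\overline\gamma<+\infty$ for a constant $\overline\gamma$, i.e. $\gamma\in L^1_\Gamma(\mathbb{R}^\mu)$.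
   Context: Setting (parameterized class of random fields): $d,n\ge1$, $D\subset\mathbb{R}^d$ bounded open; $[\underline K]:D\to\mathbb{M}_n^+(\mathbb{R})$ with $\underline k_0\|\mathbf{z}\|_2^2\le\langle[\underline K(\mathbf{x})]\mathbf{z},\mathbf{z}\rangle_2\le n^{-1/2}\widetilde{\underline k}_1\|\mathbf{z}\|_2^2$ ($0<\underline k_0<\widetilde{\underline k}_1<\infty$), $[\underline L]$ upper triangular with $[\underline K]=[\underline L]^T[\underline L]$, $\varepsilon>0$. $[G_0],[G_i]:D\to\mathbb{M}_n^S(\mathbb{R})$ with $\|G_0\|_\infty,\|G_i\|_\infty<\infty$ ($\|H\|_\infty=\operatorname{ess\,sup}_{\mathbf{x}}\|H(\mathbf{x})\|_F$), and $\sigma_1\ge\sigma_2\ge\dots>0$, being the mean, Karhunen–Loève eigenfunctions and eigenvalues of a second-order symmetric-matrix-valued random field. Integers $1\le m\le N$, $N_g\ge1$; $\boldsymbol{\Psi}=(\Psi_1,\dots,\Psi_N)$ normalized multivariate Hermite polynomials on $\mathbb{R}^{N_g}$; $\mathbb{V}_m(\mathbb{R}^N)=\{[y]\in\mathbb{M}_{N,m}(\mathbb{R}):[y]^T[y]=[I_m]\}$. For $[y]\in\mathbb{V}_m(\mathbb{R}^N)$, $\mathbf{y}\in\mathbb{R}^{N_g}$: $\boldsymbol{\eta}=[y]^T\boldsymbol{\Psi}(\mathbf{y})$, $[G^{(m,N)}(\mathbf{x})]=[G_0(\mathbf{x})]+\sum_{i=1}^m\sqrt{\sigma_i}[G_i(\mathbf{x})]\eta_i$,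 and $\mathcal{K}^{(m,N)}(\mathbf{x},\mathbf{y},[y])=\frac{1}{1+\varepsilon}[\underline L(\mathbf{x})]^T\{\varepsilon[I_n]+[K_0(\mathbf{x})]\}[\underline L(\mathbf{x})]$ with either $[K_0]=\exp_{\mathbb{M}}([G^{(m,N)}])$ (exponential type) or $[K_0]=\mathcal{L}([G^{(m,N)}])^T\mathcal{L}([G^{(m,N)}])$ (square type), where $\mathcal{L}([G])$ is upper triangular with entries $[G]_{jj'}$ for $j<j'$ and $\sqrt{h([G]_{jj};a_j)}$ on the diagonal, $a_j>0$ fixed, and each $h(\cdot;a):\mathbb{R}\to\mathbb{R}^+$ strictly increasing with $h(g;a)\le c_a+c_hg^2$ for constants $0<c_a,c_h<\infty$. $\nu=mN-m(m+1)/2$ and $\mathcal{M}_{[a]}:\mathbb{R}^\nu\to\mathbb{V}_m(\mathbb{R}^N)$ is the matrix-exponential parametrization of the compact Stiefel manifold around a fixed $[a]\in\mathbb{V}_m(\mathbb{R}^N)$ (any map into $\mathbb{V}_m(\mathbb{R}^N)$ with $\mathcal{M}_{[a]}(\mathbf{0})=[a]$ of the form $[a\ Q]\exp_{\mathbb{M}}(t\begin{bmatrix}A&-R^T\\R&0\end{bmatrix})[I_{2m,m}]$ built from $\mathbf{z}$ as in the paper). $\mu=N_g+\nu$, and $\Gamma=\Gamma_{N_g}\otimes\Gamma_\nu$ on $\mathbb{R}^\mu$, where $\Gamma_{N_g}$ is the standard Gaussian measure on $\mathbb{R}^{N_g}$ and $\Gamma_\nu$ a probability measure on $\mathbb{R}^\nu$;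 $E_\Gamma(g)=\int g\,d\Gamma$. *)

theory Defs
  imports "HOL-Probability.Probability" "Jordan_Normal_Form.Matrix"
begin

fun hermite :: "nat \<Rightarrow> real \<Rightarrow> real" where
  "hermite 0 x = 1"
| "hermite (Suc 0) x = x"
| "hermite (Suc (Suc k)) x = x * hermite (Suc k) x - real (Suc k) * hermite k x"

definition hermite_norm :: "nat \<Rightarrow> real \<Rightarrow> real" where
  "hermite_norm k x = hermite k x / sqrt (fact k)"

text \<open>Multivariate normalized Hermite polynomials Psi_1..Psi_N on R^Ng; Psi_(j+1) has
  multi-index beta j (a function on the coordinates 0..Ng-1). Vectors of R^Ng are
  functions nat => real (only coordinates below Ng matter).\<close>

definition Psi :: "nat \<Rightarrow> (nat \<Rightarrow> nat \<Rightarrow> nat) \<Rightarrow> nat \<Rightarrow> (nat \<Rightarrow> real) \<Rightarrow> real vec" where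
  "Psi Ng \<beta> N y = vec N (\<lambda>j. \<Prod>k<Ng. hermite_norm (\<beta> j k) (y k))"

definition stiefel :: "nat \<Rightarrow> nat \<Rightarrow> real mat set" where
  "stiefel N m = {Y \<in> carrier_mat N m. transpose_mat Y * Y = 1\<^sub>m m}"

definition mexp :: "real mat \<Rightarrow> real mat" where
  "mexp A = mat (dim_row A) (dim_col A) (\<lambda>(i,j). \<Sum>l. (A ^\<^sub>m l) $$ (i,j) / fact l)"

definition frob :: "real mat \<Rightarrow> real" where
  "frob A = sqrt (\<Sum>i<dim_row A. \<Sum>j<dim_col A. (A $$ (i,j))\<^sup>2)"

definition stiefel_exp_form :: "nat \<Rightarrow> nat \<Rightarrow> real mat \<Rightarrow> real mat \<Rightarrow> bool" where
  "stiefel_exp_form N m a Y \<longleftrightarrow>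
     (\<exists>Q A R t. Q \<in> carrier_mat N m \<and> A \<in> carrier_mat m m \<and> transpose_mat A = - A
        \<and> R \<in> carrier_mat m m \<and>
        Y = mat N (2*m) (\<lambda>(i,j). if j < m then a $$ (i,j) else Q $$ (i, j - m))
            * mexp (t \<cdot>\<^sub>m four_block_mat A (- transpose_mat R) R (0\<^sub>m m m))
            * mat (2*m) m (\<lambda>(i,j). if i = j then 1 else 0))"

datatype ktype = ExpType | SqType

definition G_mN :: "nat \<Rightarrow> ('d \<Rightarrow> real mat) \<Rightarrow> (nat \<Rightarrow> 'd \<Rightarrow> real mat) \<Rightarrow> (nat \<Rightarrow> real)
    \<Rightarrow> nat \<Rightarrow> real vec \<Rightarrow> 'd \<Rightarrow> real mat" where
  "G_mN n G0 G \<sigma> m \<eta> x = mat n n (\<lambda>(j,k). G0 x $$ (j,k)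
      + (\<Sum>i=1..m. sqrt (\<sigma> i) * G i x $$ (j,k) * \<eta> $ (i - 1)))"

definition sqL :: "nat \<Rightarrow> (real \<Rightarrow> real \<Rightarrow> real) \<Rightarrow> (nat \<Rightarrow> real) \<Rightarrow> real mat \<Rightarrow> real mat" where
  "sqL n h a G = mat n n (\<lambda>(j,k). if j < k then G $$ (j,k)
      else if j = k then sqrt (h (G $$ (j,j)) (a j)) else 0)"

definition K0 :: "ktype \<Rightarrow> nat \<Rightarrow> (real \<Rightarrow> real \<Rightarrow> real) \<Rightarrow> (nat \<Rightarrow> real) \<Rightarrow> real mat \<Rightarrow> real mat" where
  "K0 ty n h a G = (case ty of ExpType \<Rightarrow> mexp G
      | SqType \<Rightarrow> transpose_mat (sqL n h a G) * sqL n h a G)"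

definition K_mN :: "ktype \<Rightarrow> nat \<Rightarrow> (real \<Rightarrow> real \<Rightarrow> real) \<Rightarrow> (nat \<Rightarrow> real) \<Rightarrow> real
    \<Rightarrow> ('d \<Rightarrow> real mat) \<Rightarrow> ('d \<Rightarrow> real mat) \<Rightarrow> (nat \<Rightarrow> 'd \<Rightarrow> real mat) \<Rightarrow> (nat \<Rightarrow> real)
    \<Rightarrow> ((nat \<Rightarrow> real) \<Rightarrow> real vec) \<Rightarrow> nat
    \<Rightarrow> 'd \<Rightarrow> (nat \<Rightarrow> real) \<Rightarrow> real mat \<Rightarrow> real mat" where
  "K_mN ty n h a \<epsilon> L G0 G \<sigma> \<Psi> m x y Y =
     (1 / (1 + \<epsilon>)) \<cdot>\<^sub>m (transpose_mat (L x)
        * (\<epsilon> \<cdot>\<^sub>m 1\<^sub>m n + K0 ty n h a (G_mN n G0 G \<sigma> m (transpose_mat Y *\<^sub>v \<Psi> y) x))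
        * L x)"

definition rayleigh_inf :: "nat \<Rightarrow> real mat \<Rightarrow> ereal" where
  "rayleigh_inf n C = Inf {ereal (((C *\<^sub>v v) \<bullet> v) / (v \<bullet> v)) | v. v \<in> carrier_vec n \<and> v \<noteq> 0\<^sub>v n}"

definition rayleigh_sup :: "nat \<Rightarrow> real mat \<Rightarrow> ereal" where
  "rayleigh_sup n C = Sup {ereal (((C *\<^sub>v v) \<bullet> v) / (v \<bullet> v)) | v. v \<in> carrier_vec n \<and> v \<noteq> 0\<^sub>v n}"

definition essinf :: "'a measure \<Rightarrow> ('a \<Rightarrow> ereal) \<Rightarrow> ereal" where
  "essinf M f = - esssup M (\<lambda>x. - f x)"

definition mat_measurable :: "nat \<Rightarrow> 'a measure \<Rightarrow> ('a \<Rightarrow> real mat) \<Rightarrow> bool" where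
  "mat_measurable n M H \<longleftrightarrow> (\<forall>j<n. \<forall>k<n. (\<lambda>x. H x $$ (j,k)) \<in> borel_measurable M)"

definition Linf_mat :: "nat \<Rightarrow> 'd::euclidean_space set \<Rightarrow> ('d \<Rightarrow> real mat) \<Rightarrow> bool" where
  "Linf_mat n D H \<longleftrightarrow> mat_measurable n (lebesgue_on D) H
     \<and> esssup (lebesgue_on D) (\<lambda>x. ereal (frob (H x))) < \<infinity>"

definition sym_field :: "nat \<Rightarrow> 'd set \<Rightarrow> ('d \<Rightarrow> real mat) \<Rightarrow> bool" where
  "sym_field n D H \<longleftrightarrow> (\<forall>x\<in>D. H x \<in> carrier_mat n n \<and> transpose_mat (H x) = H x)"

definition gauss :: "nat \<Rightarrow> (nat \<Rightarrow> real) measure" where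
  "gauss Ng = PiM {..<Ng} (\<lambda>_. density lborel std_normal_density)"

end

theory Submission
  imports Defs
begin

text \<open>The matrix \<open>C = L\<^sup>T (\<epsilon> I + K\<^sub>0) L / (1 + \<epsilon>)\<close> is a congruence of \<open>\<epsilon> I + K\<^sub>0\<close>,
  and \<open>K\<^sub>0\<close> is positive semidefinite in both representations. Hence
  \<open>\<langle>C v, v\<rangle> \<ge> \<epsilon> \<langle>K v, v\<rangle> / (1 + \<epsilon>) \<ge> \<epsilon> k\<^sub>0 |v|\<^sup>2 / (1 + \<epsilon>)\<close>, uniformly in all variables.
  The upper bound is obtained entrywise: \<open>|L\<^sub>i\<^sub>j|\<^sup>2 \<le> K\<^sub>j\<^sub>j\<close>, and since the columns of a Stiefel
  matrix are unit vectors, the entries of the Gaussian-chaos matrix \<open>G_mN\<close> are bounded, for almost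
  every \<open>x\<close>, by \<open>c\<^sub>0 + (\<Sum>i. \<surd>\<sigma>\<^sub>i c\<^sub>i) |\<Psi>(y)|\<close>; these bounds propagate through the exponential
  and the square representation. In the square case the resulting \<open>\<gamma>\<close> is affine in \<open>|\<Psi>(y)|\<^sup>2\<close>,
  which is integrable because Hermite polynomials grow polynomially and the Gaussian has all moments.
  Measurability in \<open>x\<close> of the extremal Rayleigh quotients comes from restricting them to rational
  vectors.\<close>

section \<open>Entrywise bounds and quadratic forms\<close>

lemma index_mult_mat_sum:
  fixes A B :: "real mat"
  assumes "A \<in> carrier_mat n n" "B \<in> carrier_mat n n" "i < n" "j < n"
  shows "(A * B) $$ (i,j) = (\<Sum>k<n. A $$ (i,k) * B $$ (k,j))"
  using assms by (auto simp: scalar_prod_def row_def col_def atLeast0LessThan)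

lemma quadratic_form_eq_sum:
  fixes C :: "real mat"
  assumes "C \<in> carrier_mat n n" "v \<in> carrier_vec n"
  shows "(C *\<^sub>v v) \<bullet> v = (\<Sum>i<n. \<Sum>j<n. C $$ (i,j) * v $ j * v $ i)"
  using assms
  by (auto simp: scalar_prod_def mult_mat_vec_def row_def sum_distrib_right atLeast0LessThan
      intro!: sum.cong)

lemma scalar_prod_self_eq_sum: "(v :: real vec) \<in> carrier_vec n \<Longrightarrow> v \<bullet> v = (\<Sum>i<n. (v $ i)\<^sup>2)"
  unfolding power2_eq_square by (auto simp: scalar_prod_def atLeast0LessThan)

lemma scalar_prod_self_pos:
  fixes v :: "real vec"
  assumes "v \<in> carrier_vec n" "v \<noteq> 0\<^sub>v n"
  shows "0 < v \<bullet> v"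
proof -
  obtain i where i: "i < n" "v $ i \<noteq> 0"
    using assms by (metis eq_vecI carrier_vecD index_zero_vec)
  have "(v $ i)\<^sup>2 \<le> (\<Sum>i<n. (v $ i)\<^sup>2)" by (rule member_le_sum) (use i in auto)
  moreover have "0 < (v $ i)\<^sup>2" using i by simp
  ultimately show ?thesis using scalar_prod_self_eq_sum[OF assms(1)] by linarith
qed

lemma quadratic_form_transpose_mult:
  fixes B :: "real mat"
  assumes B: "B \<in> carrier_mat k n" and v: "v \<in> carrier_vec n"
  shows "((transpose_mat B * B) *\<^sub>v v) \<bullet> v = (B *\<^sub>v v) \<bullet> (B *\<^sub>v v)"
proof -
  have "((transpose_mat B * B) *\<^sub>v v) \<bullet> v = (transpose_mat B *\<^sub>v (B *\<^sub>v v)) \<bullet> v"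
    using B v by (simp add: assoc_mult_mat_vec[of _ n k _ n])
  also have "\<dots> = (B *\<^sub>v v) \<bullet> (B *\<^sub>v v)"
    by (rule transpose_vec_mult_scalar[OF B v]) (use B v in auto)
  finally show ?thesis .
qed

lemma quadratic_form_transpose_mult_nonneg:
  fixes B :: "real mat"
  assumes "B \<in> carrier_mat k n" "v \<in> carrier_vec n"
  shows "0 \<le> ((transpose_mat B * B) *\<^sub>v v) \<bullet> v"
  unfolding quadratic_form_transpose_mult[OF assms]
  using scalar_prod_self_eq_sum[of "B *\<^sub>v v" k] assms by (simp add: sum_nonneg)

lemma smult_mat_mult_vec:
  fixes A :: "real mat"
  shows "A \<in> carrier_mat n k \<Longrightarrow> v \<in> carrier_vec k \<Longrightarrow> (c \<cdot>\<^sub>m A) *\<^sub>v v = c \<cdot>\<^sub>v (A *\<^sub>v v)"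
  by (intro eq_vecI) auto

lemma quadratic_form_congruence:
  fixes L X :: "real mat"
  assumes L: "L \<in> carrier_mat n n" and X: "X \<in> carrier_mat n n" and v: "v \<in> carrier_vec n"
  shows "((c \<cdot>\<^sub>m (transpose_mat L * X * L)) *\<^sub>v v) \<bullet> v = c * ((X *\<^sub>v (L *\<^sub>v v)) \<bullet> (L *\<^sub>v v))"
proof -
  have LX: "transpose_mat L * X \<in> carrier_mat n n" using L X by auto
  have "(transpose_mat L * X * L) *\<^sub>v v = transpose_mat L *\<^sub>v (X *\<^sub>v (L *\<^sub>v v))"
    using L X v LX by (simp add: assoc_mult_mat_vec[of _ n n _ n])
  moreover have "(transpose_mat L *\<^sub>v (X *\<^sub>v (L *\<^sub>v v))) \<bullet> v = (X *\<^sub>v (L *\<^sub>v v)) \<bullet> (L *\<^sub>v v)"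
    by (rule transpose_vec_mult_scalar[OF L v]) (use X L v in auto)
  ultimately show ?thesis
    using L LX v by (simp add: smult_mat_mult_vec[of _ n n])
qed

definition entry_bounded :: "nat \<Rightarrow> real mat \<Rightarrow> real \<Rightarrow> bool" where
  "entry_bounded n A c \<longleftrightarrow> A \<in> carrier_mat n n \<and> (\<forall>i<n. \<forall>j<n. \<bar>A $$ (i,j)\<bar> \<le> c)"

lemma entry_bounded_carrier: "entry_bounded n A c \<Longrightarrow> A \<in> carrier_mat n n"
  unfolding entry_bounded_def by simp

lemma entry_boundedD: "entry_bounded n A c \<Longrightarrow> i < n \<Longrightarrow> j < n \<Longrightarrow> \<bar>A $$ (i,j)\<bar> \<le> c"
  unfolding entry_bounded_def by simp

lemma entry_bounded_one: "entry_bounded n (1\<^sub>m n) 1"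
  unfolding entry_bounded_def by auto

lemma entry_bounded_transpose: "entry_bounded n A a \<Longrightarrow> entry_bounded n (transpose_mat A) a"
  unfolding entry_bounded_def by auto

lemma entry_bounded_smult: "entry_bounded n A a \<Longrightarrow> entry_bounded n (s \<cdot>\<^sub>m A) (\<bar>s\<bar> * a)"
  unfolding entry_bounded_def by (auto simp: abs_mult intro!: mult_left_mono)

lemma entry_bounded_add:
  "entry_bounded n A a \<Longrightarrow> entry_bounded n B b \<Longrightarrow> entry_bounded n (A + B) (a + b)"
  unfolding entry_bounded_def by (auto intro!: order_trans[OF abs_triangle_ineq] add_mono)

lemma entry_bounded_mult:
  assumes A: "entry_bounded n A a" and B: "entry_bounded n B b"
  shows "entry_bounded n (A * B) (n * a * b)"
  unfolding entry_bounded_def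
proof (intro conjI allI impI)
  have Ac: "A \<in> carrier_mat n n" and Bc: "B \<in> carrier_mat n n"
    using A B by (auto simp: entry_bounded_def)
  then show "A * B \<in> carrier_mat n n" by simp
  fix i j assume ij: "i < n" "j < n"
  have "\<bar>(A * B) $$ (i,j)\<bar> \<le> (\<Sum>k<n. \<bar>A $$ (i,k) * B $$ (k,j)\<bar>)"
    unfolding index_mult_mat_sum[OF Ac Bc ij] by (rule sum_abs)
  also have "\<dots> \<le> (\<Sum>k<n. a * b)"
  proof (rule sum_mono)
    fix k assume "k \<in> {..<n}"
    then have "\<bar>A $$ (i,k)\<bar> \<le> a" "\<bar>B $$ (k,j)\<bar> \<le> b"
      using ij entry_boundedD[OF A] entry_boundedD[OF B] by auto
    then show "\<bar>A $$ (i,k) * B $$ (k,j)\<bar> \<le> a * b"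
      unfolding abs_mult by (intro mult_mono) (auto intro: order_trans[OF abs_ge_zero])
  qed
  finally show "\<bar>(A * B) $$ (i,j)\<bar> \<le> n * a * b" by simp
qed

lemma entry_bounded_exists:
  assumes "A \<in> carrier_mat n n"
  shows "\<exists>c. entry_bounded n A c"
proof -
  have "\<bar>A $$ (i,j)\<bar> \<le> (\<Sum>i<n. \<Sum>j<n. \<bar>A $$ (i,j)\<bar>)" if "i < n" "j < n" for i j
  proof -
    have "\<bar>A $$ (i,j)\<bar> \<le> (\<Sum>j<n. \<bar>A $$ (i,j)\<bar>)"
      by (rule member_le_sum) (use that in auto)
    also have "\<dots> \<le> (\<Sum>i<n. \<Sum>j<n. \<bar>A $$ (i,j)\<bar>)"
      by (rule member_le_sum[where f = "\<lambda>i. \<Sum>j<n. \<bar>A $$ (i,j)\<bar>"])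
         (use that in \<open>auto intro: sum_nonneg\<close>)
    finally show ?thesis .
  qed
  thus ?thesis using assms unfolding entry_bounded_def by blast
qed

lemma abs_index_le_frob:
  fixes H :: "real mat"
  assumes "H \<in> carrier_mat n n" "j < n" "k < n"
  shows "\<bar>H $$ (j,k)\<bar> \<le> frob H"
proof -
  have "(H $$ (j,k))\<^sup>2 \<le> (\<Sum>k<n. (H $$ (j,k))\<^sup>2)" by (rule member_le_sum) (use assms in auto)
  also have "\<dots> \<le> (\<Sum>i<n. \<Sum>k<n. (H $$ (i,k))\<^sup>2)"
    by (rule member_le_sum[where f = "\<lambda>i. \<Sum>k<n. (H $$ (i,k))\<^sup>2"])
       (use assms in \<open>auto intro: sum_nonneg\<close>)
  finally have "sqrt ((H $$ (j,k))\<^sup>2) \<le> sqrt (\<Sum>i<n. \<Sum>k<n. (H $$ (i,k))\<^sup>2)"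
    by (rule real_sqrt_le_mono)
  then show ?thesis using assms unfolding frob_def by simp
qed

lemma frob_nonneg: "0 \<le> frob H"
  unfolding frob_def by (simp add: sum_nonneg)

lemma entry_bounded_frob:
  assumes "H \<in> carrier_mat n n" "frob H \<le> c"
  shows "entry_bounded n H c"
  unfolding entry_bounded_def
  using assms abs_index_le_frob[OF assms(1)] by force

lemma abs_quadratic_form_le:
  fixes C :: "real mat"
  assumes C: "entry_bounded n C c" and v: "v \<in> carrier_vec n"
  shows "\<bar>(C *\<^sub>v v) \<bullet> v\<bar> \<le> c * n * (v \<bullet> v)"
proof -
  have "\<bar>(C *\<^sub>v v) \<bullet> v\<bar> \<le> (\<Sum>i<n. \<Sum>j<n. \<bar>C $$ (i,j)\<bar> * \<bar>v $ j * v $ i\<bar>)"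
    unfolding quadratic_form_eq_sum[OF entry_bounded_carrier[OF C] v]
    by (rule order_trans[OF sum_abs], rule sum_mono, rule order_trans[OF sum_abs])
      (simp add: abs_mult mult.assoc)
  also have "\<dots> \<le> (\<Sum>i<n. \<Sum>j<n. c * (((v $ i)\<^sup>2 + (v $ j)\<^sup>2) / 2))"
  proof (intro sum_mono mult_mono)
    fix i j assume ij: "i \<in> {..<n}" "j \<in> {..<n}"
    show "\<bar>C $$ (i,j)\<bar> \<le> c" using entry_boundedD[OF C] ij by simp
    then show "0 \<le> c" by (meson abs_ge_zero order_trans)
    \<comment> \<open>AM--GM\<close>
    have "0 \<le> (\<bar>v $ i\<bar> - \<bar>v $ j\<bar>)\<^sup>2" by simp
    then show "\<bar>v $ j * v $ i\<bar> \<le> ((v $ i)\<^sup>2 + (v $ j)\<^sup>2) / 2"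
      by (simp add: abs_mult power2_eq_square algebra_simps)
  qed simp
  also have "\<dots> = c * n * (v \<bullet> v)"
    unfolding scalar_prod_self_eq_sum[OF v]
    by (simp add: sum.distrib add_divide_distrib sum_divide_distrib sum_distrib_left algebra_simps)
  finally show ?thesis .
qed

section \<open>The matrix exponential\<close>

lemma pow_mat_add:
  fixes A :: "real mat"
  assumes "A \<in> carrier_mat n n"
  shows "A ^\<^sub>m a * A ^\<^sub>m b = A ^\<^sub>m (a + b)"
proof (induction b)
  case 0 thus ?case using assms by simp
next
  case (Suc b)
  have "A ^\<^sub>m a * A ^\<^sub>m Suc b = (A ^\<^sub>m a * A ^\<^sub>m b) * A"
    using assms by (simp add: assoc_mult_mat[symmetric, of _ n n _ n])
  thus ?case using Suc by simp
qed

lemma smult_pow_mat: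
  fixes A :: "real mat"
  assumes "A \<in> carrier_mat n n"
  shows "(c \<cdot>\<^sub>m A) ^\<^sub>m l = c ^ l \<cdot>\<^sub>m A ^\<^sub>m l"
proof (induction l)
  case 0 thus ?case using assms by (auto intro!: eq_matI)
next
  case (Suc l)
  have "(c \<cdot>\<^sub>m A) ^\<^sub>m Suc l = (c ^ l \<cdot>\<^sub>m A ^\<^sub>m l) * (c \<cdot>\<^sub>m A)" using Suc by simp
  also have "\<dots> = c ^ Suc l \<cdot>\<^sub>m (A ^\<^sub>m l * A)"
    using assms by (auto simp: mult_smult_distrib[of _ n n _ n] mult_smult_assoc_mat[of _ n n _ n]
        intro!: eq_matI)
  finally show ?case by simp
qed

lemma transpose_pow_mat_sym:
  fixes A :: "real mat"
  assumes "A \<in> carrier_mat n n" "transpose_mat A = A"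
  shows "transpose_mat (A ^\<^sub>m l) = A ^\<^sub>m l"
proof (induction l)
  case 0 thus ?case using assms by simp
next
  case (Suc l)
  have "transpose_mat (A ^\<^sub>m Suc l) = A * A ^\<^sub>m l"
    using assms Suc by (simp add: transpose_mult[of _ n n _ n])
  also have "\<dots> = A ^\<^sub>m Suc l" using pow_mat_add[OF assms(1), of 1 l] assms(1) by simp
  finally show ?case .
qed

lemma entry_bounded_pow_mat: "entry_bounded n A a \<Longrightarrow> entry_bounded n (A ^\<^sub>m l) ((n * a) ^ l)"
proof (induction l)
  case 0 thus ?case
    using entry_bounded_one[of n] entry_bounded_carrier[of n A a] by simp
next
  case (Suc l)
  then have "entry_bounded n (A ^\<^sub>m l * A) (n * (n * a) ^ l * a)" by (intro entry_bounded_mult)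
  thus ?case by (simp add: algebra_simps)
qed

lemma mexp_carrier: "A \<in> carrier_mat n n \<Longrightarrow> mexp A \<in> carrier_mat n n"
  unfolding mexp_def by auto

lemma index_mexp: "A \<in> carrier_mat n n \<Longrightarrow> i < n \<Longrightarrow> j < n \<Longrightarrow>
   mexp A $$ (i,j) = (\<Sum>l. (A ^\<^sub>m l) $$ (i,j) / fact l)"
  unfolding mexp_def by auto

lemma
  fixes A :: "real mat"
  assumes A: "entry_bounded n A a" and ij: "i < n" "j < n"
  shows summable_abs_mexp_series: "summable (\<lambda>l. \<bar>(A ^\<^sub>m l) $$ (i,j) / fact l\<bar>)"
    and abs_index_mexp_le: "\<bar>mexp A $$ (i,j)\<bar> \<le> exp (n * a)"
proof -
  have bound: "\<bar>(A ^\<^sub>m l) $$ (i,j) / fact l\<bar> \<le> (n * a) ^ l /\<^sub>R fact l" for l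
    using entry_boundedD[OF entry_bounded_pow_mat[OF A] ij, of l]
    by (simp add: divide_right_mono field_simps)
  have exp_series: "summable (\<lambda>l. (real n * a) ^ l /\<^sub>R fact l)" by (rule summable_exp_generic)
  show abs_series: "summable (\<lambda>l. \<bar>(A ^\<^sub>m l) $$ (i,j) / fact l\<bar>)"
    by (rule summable_comparison_test[OF _ exp_series]) (use bound in simp)
  have "\<bar>mexp A $$ (i,j)\<bar> \<le> (\<Sum>l. \<bar>(A ^\<^sub>m l) $$ (i,j) / fact l\<bar>)"
    unfolding index_mexp[OF entry_bounded_carrier[OF A] ij] by (rule summable_rabs[OF abs_series])
  also have "\<dots> \<le> (\<Sum>l. (real n * a) ^ l /\<^sub>R fact l)"
    by (rule suminf_le[OF bound abs_series exp_series])
  also have "\<dots> = exp (n * a)" by (simp add: exp_def)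
  finally show "\<bar>mexp A $$ (i,j)\<bar> \<le> exp (n * a)" .
qed

lemma entry_bounded_mexp: "entry_bounded n A a \<Longrightarrow> entry_bounded n (mexp A) (exp (n * a))"
  using abs_index_mexp_le[of n A a] mexp_carrier[OF entry_bounded_carrier]
  unfolding entry_bounded_def by simp

lemma summable_mexp_series:
  fixes A :: "real mat"
  assumes "A \<in> carrier_mat n n" "i < n" "j < n"
  shows "summable (\<lambda>l. (A ^\<^sub>m l) $$ (i,j) / fact l)"
proof -
  obtain a where "entry_bounded n A a" using entry_bounded_exists[OF assms(1)] ..
  then show ?thesis by (rule summable_rabs_cancel[OF summable_abs_mexp_series[OF _ assms(2,3)]])
qed

lemma inverse_fact_convolution: "(\<Sum>a\<le>N. 1 / (fact a * fact (N - a)) :: real) = 2 ^ N / fact N"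
proof -
  have "(\<Sum>a\<le>N. 1 / (fact a * fact (N - a)) :: real) = (\<Sum>a\<le>N. real (N choose a) / fact N)"
    by (intro sum.cong refl) (simp add: binomial_fact field_simps)
  also have "\<dots> = real (\<Sum>a\<le>N. N choose a) / fact N"
    by (simp add: sum_divide_distrib)
  also have "\<dots> = 2 ^ N / fact N" by (simp add: choose_row_sum)
  finally show ?thesis .
qed

lemma pow_mat_cauchy_coefficient:
  fixes B :: "real mat"
  assumes B: "B \<in> carrier_mat n n" and ij: "i < n" "j < n"
  shows "(\<Sum>k<n. \<Sum>a\<le>N. (B ^\<^sub>m a) $$ (i,k) / fact a * ((B ^\<^sub>m (N - a)) $$ (k,j) / fact (N - a)))
    = (2 ^ N \<cdot>\<^sub>m B ^\<^sub>m N) $$ (i,j) / fact N"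
proof -
  have "(\<Sum>k<n. \<Sum>a\<le>N. (B ^\<^sub>m a) $$ (i,k) / fact a * ((B ^\<^sub>m (N - a)) $$ (k,j) / fact (N - a)))
      = (\<Sum>a\<le>N. (\<Sum>k<n. (B ^\<^sub>m a) $$ (i,k) * (B ^\<^sub>m (N - a)) $$ (k,j)) / (fact a * fact (N - a)))"
    by (subst sum.swap) (simp add: sum_divide_distrib)
  also have "\<dots> = (\<Sum>a\<le>N. (B ^\<^sub>m N) $$ (i,j) * (1 / (fact a * fact (N - a))))"
  proof (intro sum.cong refl)
    fix a assume "a \<in> {..N}"
    then have "B ^\<^sub>m a * B ^\<^sub>m (N - a) = B ^\<^sub>m N" using pow_mat_add[OF B, of a "N - a"] by simp
    then show "(\<Sum>k<n. (B ^\<^sub>m a) $$ (i,k) * (B ^\<^sub>m (N - a)) $$ (k,j)) / (fact a * fact (N - a))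
         = (B ^\<^sub>m N) $$ (i,j) * (1 / (fact a * fact (N - a)))"
      using index_mult_mat_sum[of "B ^\<^sub>m a" n "B ^\<^sub>m (N - a)" i j] ij B by simp
  qed
  also have "\<dots> = (B ^\<^sub>m N) $$ (i,j) * (2 ^ N / fact N)"
    by (subst sum_distrib_left[symmetric], subst inverse_fact_convolution, rule refl)
  also have "\<dots> = (2 ^ N \<cdot>\<^sub>m B ^\<^sub>m N) $$ (i,j) / fact N"
    using ij B by simp
  finally show ?thesis .
qed

lemma mexp_mult_self:
  fixes B :: "real mat"
  assumes B: "B \<in> carrier_mat n n"
  shows "mexp B * mexp B = mexp (2 \<cdot>\<^sub>m B)"
proof (rule eq_matI)
  fix i j assume "i < dim_row (mexp (2 \<cdot>\<^sub>m B))" "j < dim_col (mexp (2 \<cdot>\<^sub>m B))"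
  hence ij: "i < n" "j < n" using B by (auto simp: mexp_def)
  define c where "c i' j' l = (B ^\<^sub>m l) $$ (i',j') / fact l" for i' j' l
  obtain a where "entry_bounded n B a" using entry_bounded_exists[OF B] by blast
  then have abs_summable: "summable (\<lambda>l. norm (c i' j' l))" if "i' < n" "j' < n" for i' j'
    using summable_abs_mexp_series[OF _ that] unfolding c_def real_norm_def by blast
  have "(mexp B * mexp B) $$ (i,j) = (\<Sum>k<n. mexp B $$ (i,k) * mexp B $$ (k,j))"
    by (rule index_mult_mat_sum[OF mexp_carrier[OF B] mexp_carrier[OF B] ij])
  also have "\<dots> = (\<Sum>k<n. \<Sum>N. \<Sum>a\<le>N. c i k a * c k j (N - a))"
    using ij B by (intro sum.cong refl)
      (simp add: index_mexp Cauchy_product[OF abs_summable abs_summable] c_def[symmetric])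
  also have "\<dots> = (\<Sum>N. \<Sum>k<n. \<Sum>a\<le>N. c i k a * c k j (N - a))"
    using ij by (intro suminf_sum[symmetric] summable_Cauchy_product abs_summable) auto
  also have "\<dots> = (\<Sum>N. (2 ^ N \<cdot>\<^sub>m B ^\<^sub>m N) $$ (i,j) / fact N)"
    unfolding c_def pow_mat_cauchy_coefficient[OF B ij] ..
  also have "\<dots> = mexp (2 \<cdot>\<^sub>m B) $$ (i,j)"
    using B ij by (simp add: index_mexp[of "2 \<cdot>\<^sub>m B" n] smult_pow_mat[OF B])
  finally show "(mexp B * mexp B) $$ (i,j) = mexp (2 \<cdot>\<^sub>m B) $$ (i,j)" .
qed (use B in \<open>auto simp: mexp_def\<close>)

lemma transpose_mexp_sym:
  fixes B :: "real mat"
  assumes B: "B \<in> carrier_mat n n" "transpose_mat B = B"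
  shows "transpose_mat (mexp B) = mexp B"
proof (rule eq_matI)
  fix i j assume "i < dim_row (mexp B)" "j < dim_col (mexp B)"
  hence ij: "i < n" "j < n" using B by (auto simp: mexp_def)
  have "(B ^\<^sub>m l) $$ (j,i) = (B ^\<^sub>m l) $$ (i,j)" for l
    using transpose_pow_mat_sym[OF B, of l] ij B
    by (metis index_transpose_mat(1) pow_mat_dim_square)
  then show "transpose_mat (mexp B) $$ (i,j) = mexp B $$ (i,j)"
    using ij B mexp_carrier[OF B(1)] by (simp add: index_mexp)
qed (use B in \<open>auto simp: mexp_def\<close>)

text \<open>\<open>exp G = (exp (G/2))\<^sup>T exp (G/2)\<close> for symmetric \<open>G\<close>.\<close>
lemma mexp_quadratic_form_nonneg:
  fixes G :: "real mat"
  assumes G: "G \<in> carrier_mat n n" "transpose_mat G = G" and v: "v \<in> carrier_vec n"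
  shows "0 \<le> (mexp G *\<^sub>v v) \<bullet> v"
proof -
  define B where "B = (1/2) \<cdot>\<^sub>m G"
  have B: "B \<in> carrier_mat n n" "transpose_mat B = B"
    using G unfolding B_def by (auto intro!: eq_matI) (metis index_transpose_mat(1) carrier_matD)
  have "2 \<cdot>\<^sub>m B = G" unfolding B_def using G by (auto intro!: eq_matI)
  then have "mexp G = transpose_mat (mexp B) * mexp B"
    using mexp_mult_self[OF B(1)] transpose_mexp_sym[OF B] by simp
  then show ?thesis
    using quadratic_form_transpose_mult_nonneg[OF mexp_carrier[OF B(1)] v] by simp
qed

section \<open>Rayleigh quotients\<close>

lemma rayleigh_inf_geI:
  fixes C :: "real mat"
  assumes "\<And>v. v \<in> carrier_vec n \<Longrightarrow> v \<noteq> 0\<^sub>v n \<Longrightarrow> \<alpha> * (v \<bullet> v) \<le> (C *\<^sub>v v) \<bullet> v"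
  shows "ereal \<alpha> \<le> rayleigh_inf n C"
  unfolding rayleigh_inf_def
proof (rule Inf_greatest, clarify)
  fix v :: "real vec" assume v: "v \<in> carrier_vec n" "v \<noteq> 0\<^sub>v n"
  then show "ereal \<alpha> \<le> ereal ((C *\<^sub>v v) \<bullet> v / (v \<bullet> v))"
    using assms[OF v] scalar_prod_self_pos[OF v] by (simp add: le_divide_eq)
qed

lemma rayleigh_sup_leI:
  fixes C :: "real mat"
  assumes "\<And>v. v \<in> carrier_vec n \<Longrightarrow> v \<noteq> 0\<^sub>v n \<Longrightarrow> (C *\<^sub>v v) \<bullet> v \<le> \<gamma> * (v \<bullet> v)"
  shows "rayleigh_sup n C \<le> ereal \<gamma>"
  unfolding rayleigh_sup_def
proof (rule Sup_least, clarify)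
  fix v :: "real vec" assume v: "v \<in> carrier_vec n" "v \<noteq> 0\<^sub>v n"
  then show "ereal ((C *\<^sub>v v) \<bullet> v / (v \<bullet> v)) \<le> ereal \<gamma>"
    using assms[OF v] scalar_prod_self_pos[OF v] by (simp add: divide_le_eq)
qed

lemma rayleigh_inf_eq_uminus_sup:
  fixes C :: "real mat"
  assumes C: "C \<in> carrier_mat n n"
  shows "rayleigh_inf n C = - rayleigh_sup n ((-1) \<cdot>\<^sub>m C)"
proof -
  have "ereal ((((-1) \<cdot>\<^sub>m C) *\<^sub>v v) \<bullet> v / (v \<bullet> v)) = - ereal ((C *\<^sub>v v) \<bullet> v / (v \<bullet> v))"
    if "v \<in> carrier_vec n" for v
    using C that by (simp add: smult_mat_mult_vec[of _ n n])
  then have "{ereal ((((-1) \<cdot>\<^sub>m C) *\<^sub>v v) \<bullet> v / (v \<bullet> v)) | v. v \<in> carrier_vec n \<and> v \<noteq> 0\<^sub>v n}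
      = uminus ` {ereal ((C *\<^sub>v v) \<bullet> v / (v \<bullet> v)) | v. v \<in> carrier_vec n \<and> v \<noteq> 0\<^sub>v n}"
    by (auto simp: image_iff) (metis uminus_ereal.simps(1))
  then show ?thesis
    unfolding rayleigh_inf_def rayleigh_sup_def by (simp add: ereal_Sup_uminus_image_eq)
qed

text \<open>The zero vector gets the quotient \<open>-\<infinity>\<close>, so that it does not contribute to the supremum.\<close>

definition rat_vec :: "nat \<Rightarrow> rat list \<Rightarrow> real vec" where
  "rat_vec n xs = vec n (\<lambda>i. real_of_rat (xs ! i))"

definition rayleigh_quotient_rat :: "nat \<Rightarrow> real mat \<Rightarrow> rat list \<Rightarrow> ereal" where
  "rayleigh_quotient_rat n C xs = (if rat_vec n xs = 0\<^sub>v n then -\<infinity>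
      else ereal (((C *\<^sub>v rat_vec n xs) \<bullet> rat_vec n xs) / (rat_vec n xs \<bullet> rat_vec n xs)))"

lemma rat_vec_approx: "\<exists>xs. \<forall>i<n. (\<lambda>k. rat_vec n (xs k) $ i) \<longlonglongrightarrow> v $ i"
proof -
  have "\<exists>r :: nat \<Rightarrow> rat. (\<lambda>k. real_of_rat (r k)) \<longlonglongrightarrow> x" for x :: real
  proof -
    have "x \<in> closure \<rat>" by (simp add: Rats_closure_real)
    then obtain s where s: "\<forall>k. s k \<in> \<rat>" "s \<longlonglongrightarrow> x" unfolding closure_sequential by blast
    then have "\<forall>k. \<exists>q. s k = real_of_rat q" unfolding Rats_def by blast
    then obtain r where "\<forall>k. s k = real_of_rat (r k)" by metis
    then have "s = (\<lambda>k. real_of_rat (r k))" by auto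
    then show ?thesis using s(2) by auto
  qed
  then have "\<forall>i. \<exists>r :: nat \<Rightarrow> rat. (\<lambda>k. real_of_rat (r k)) \<longlonglongrightarrow> v $ i" by blast
  then obtain R where R: "\<forall>i. (\<lambda>k. real_of_rat (R i k)) \<longlonglongrightarrow> v $ i" by metis
  show ?thesis
    by (rule exI[of _ "\<lambda>k. map (\<lambda>i. R i k) [0..<n]"]) (simp add: rat_vec_def R)
qed

lemma tendsto_rayleigh_quotient:
  fixes C :: "real mat" and v :: "real vec"
  assumes C: "C \<in> carrier_mat n n" and v: "v \<in> carrier_vec n" "v \<noteq> 0\<^sub>v n"
    and w: "\<And>k. w k \<in> carrier_vec n" and conv: "\<And>i. i < n \<Longrightarrow> (\<lambda>k. w k $ i) \<longlonglongrightarrow> v $ i"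
  shows "(\<lambda>k. (C *\<^sub>v w k) \<bullet> w k / (w k \<bullet> w k)) \<longlonglongrightarrow> (C *\<^sub>v v) \<bullet> v / (v \<bullet> v)"
    and "eventually (\<lambda>k. w k \<noteq> 0\<^sub>v n) sequentially"
proof -
  define num where "num u = (\<Sum>i<n. \<Sum>j<n. C $$ (i,j) * u $ j * u $ i)" for u :: "real vec"
  define den where "den u = (\<Sum>i<n. (u $ i)\<^sup>2)" for u :: "real vec"
  have quotient: "(C *\<^sub>v u) \<bullet> u / (u \<bullet> u) = num u / den u" if "u \<in> carrier_vec n" for u
    unfolding num_def den_def quadratic_form_eq_sum[OF C that] scalar_prod_self_eq_sum[OF that] ..
  have den_pos: "0 < den v"
    using scalar_prod_self_pos[OF v] scalar_prod_self_eq_sum[OF v(1)] unfolding den_def by simp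
  have den_conv: "(\<lambda>k. den (w k)) \<longlonglongrightarrow> den v"
    unfolding den_def by (intro tendsto_intros conv) auto
  have "(\<lambda>k. num (w k) / den (w k)) \<longlonglongrightarrow> num v / den v"
    unfolding num_def by (intro tendsto_intros conv den_conv) (use den_pos in auto)
  then show "(\<lambda>k. (C *\<^sub>v w k) \<bullet> w k / (w k \<bullet> w k)) \<longlonglongrightarrow> (C *\<^sub>v v) \<bullet> v / (v \<bullet> v)"
    using quotient w v(1) by simp
  show "eventually (\<lambda>k. w k \<noteq> 0\<^sub>v n) sequentially"
    using order_tendstoD(1)[OF den_conv den_pos] by eventually_elim (auto simp: den_def)
qed

lemma rayleigh_sup_eq_SUP_rat:
  fixes C :: "real mat"
  assumes C: "C \<in> carrier_mat n n"
  shows "rayleigh_sup n C = (SUP xs. rayleigh_quotient_rat n C xs)"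
proof (rule antisym)
  show "(SUP xs. rayleigh_quotient_rat n C xs) \<le> rayleigh_sup n C"
    unfolding rayleigh_quotient_rat_def rayleigh_sup_def
    by (intro SUP_least) (auto intro!: Sup_upper simp: rat_vec_def)
  show "rayleigh_sup n C \<le> (SUP xs. rayleigh_quotient_rat n C xs)"
    unfolding rayleigh_sup_def
  proof (rule Sup_least, clarify)
    fix v :: "real vec" assume v: "v \<in> carrier_vec n" "v \<noteq> 0\<^sub>v n"
    obtain xs where conv: "\<And>i. i < n \<Longrightarrow> (\<lambda>k. rat_vec n (xs k) $ i) \<longlonglongrightarrow> v $ i"
      using rat_vec_approx by blast
    have w: "rat_vec n (xs k) \<in> carrier_vec n" for k unfolding rat_vec_def by simp
    have "(\<lambda>k. (C *\<^sub>v rat_vec n (xs k)) \<bullet> rat_vec n (xs k) / (rat_vec n (xs k) \<bullet> rat_vec n (xs k)))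
        \<longlonglongrightarrow> (C *\<^sub>v v) \<bullet> v / (v \<bullet> v)"
      by (rule tendsto_rayleigh_quotient(1)[OF C v]) (use w conv in auto)
    then have "(\<lambda>k. ereal ((C *\<^sub>v rat_vec n (xs k)) \<bullet> rat_vec n (xs k)
        / (rat_vec n (xs k) \<bullet> rat_vec n (xs k)))) \<longlonglongrightarrow> ereal ((C *\<^sub>v v) \<bullet> v / (v \<bullet> v))"
      by (rule tendsto_ereal)
    moreover have "eventually (\<lambda>k. rat_vec n (xs k) \<noteq> 0\<^sub>v n) sequentially"
      by (rule tendsto_rayleigh_quotient(2)[OF C v]) (use w conv in auto)
    then have "eventually (\<lambda>k. ereal ((C *\<^sub>v rat_vec n (xs k)) \<bullet> rat_vec n (xs k)
        / (rat_vec n (xs k) \<bullet> rat_vec n (xs k))) \<le> (SUP xs. rayleigh_quotient_rat n C xs)) sequentially"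
    proof (rule eventually_mono)
      fix k assume "rat_vec n (xs k) \<noteq> 0\<^sub>v n"
      then have "rayleigh_quotient_rat n C (xs k) = ereal ((C *\<^sub>v rat_vec n (xs k)) \<bullet> rat_vec n (xs k)
          / (rat_vec n (xs k) \<bullet> rat_vec n (xs k)))"
        by (simp add: rayleigh_quotient_rat_def)
      then show "ereal ((C *\<^sub>v rat_vec n (xs k)) \<bullet> rat_vec n (xs k) / (rat_vec n (xs k) \<bullet> rat_vec n (xs k)))
          \<le> (SUP xs. rayleigh_quotient_rat n C xs)"
        by (metis SUP_upper UNIV_I)
    qed
    ultimately show "ereal ((C *\<^sub>v v) \<bullet> v / (v \<bullet> v)) \<le> (SUP xs. rayleigh_quotient_rat n C xs)"
      by (rule tendsto_upperbound) simp
  qed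
qed

section \<open>Measurable matrix-valued functions\<close>

definition measurable_square_mat :: "nat \<Rightarrow> 'a measure \<Rightarrow> ('a \<Rightarrow> real mat) \<Rightarrow> bool" where
  "measurable_square_mat n M H \<longleftrightarrow> (\<forall>x\<in>space M. H x \<in> carrier_mat n n) \<and> mat_measurable n M H"

lemma measurable_square_matI:
  assumes "\<And>x. x \<in> space M \<Longrightarrow> H x \<in> carrier_mat n n"
    and "\<And>j k. j < n \<Longrightarrow> k < n \<Longrightarrow> (\<lambda>x. H x $$ (j,k)) \<in> borel_measurable M"
  shows "measurable_square_mat n M H"
  using assms unfolding measurable_square_mat_def mat_measurable_def by blast

lemma measurable_square_matD:
  assumes "measurable_square_mat n M H"
  shows "x \<in> space M \<Longrightarrow> H x \<in> carrier_mat n n"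
    and "x \<in> space M \<Longrightarrow> dim_row (H x) = n"
    and "x \<in> space M \<Longrightarrow> dim_col (H x) = n"
    and "j < n \<Longrightarrow> k < n \<Longrightarrow> (\<lambda>x. H x $$ (j,k)) \<in> borel_measurable M"
  using assms unfolding measurable_square_mat_def mat_measurable_def by auto

lemma measurable_square_mat_const: "A \<in> carrier_mat n n \<Longrightarrow> measurable_square_mat n M (\<lambda>x. A)"
  by (rule measurable_square_matI) auto

lemma measurable_square_mat_mult:
  assumes A: "measurable_square_mat n M A" and B: "measurable_square_mat n M B"
  shows "measurable_square_mat n M (\<lambda>x. A x * B x)"
proof (rule measurable_square_matI)
  fix j k assume jk: "j < n" "k < n"
  have "(\<lambda>x. \<Sum>l<n. A x $$ (j,l) * B x $$ (l,k)) \<in> borel_measurable M"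
    using measurable_square_matD(4)[OF A] measurable_square_matD(4)[OF B] jk by auto
  then show "(\<lambda>x. (A x * B x) $$ (j,k)) \<in> borel_measurable M"
    using index_mult_mat_sum[OF measurable_square_matD(1)[OF A] measurable_square_matD(1)[OF B] jk]
    by (subst measurable_cong) auto
next
  fix x assume "x \<in> space M"
  then show "A x * B x \<in> carrier_mat n n"
    using measurable_square_matD(1)[OF A] measurable_square_matD(1)[OF B] by (meson mult_carrier_mat)
qed

lemma measurable_square_mat_add:
  assumes A: "measurable_square_mat n M A" and B: "measurable_square_mat n M B"
  shows "measurable_square_mat n M (\<lambda>x. A x + B x)"
proof (rule measurable_square_matI)
  fix j k assume jk: "j < n" "k < n"
  have "(\<lambda>x. A x $$ (j,k) + B x $$ (j,k)) \<in> borel_measurable M"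
    using measurable_square_matD(4)[OF A] measurable_square_matD(4)[OF B] jk by auto
  then show "(\<lambda>x. (A x + B x) $$ (j,k)) \<in> borel_measurable M"
    using measurable_square_matD(2,3)[OF B] jk by (subst measurable_cong) auto
qed (use measurable_square_matD(1)[OF B] in auto)

lemma measurable_square_mat_smult:
  assumes A: "measurable_square_mat n M A"
  shows "measurable_square_mat n M (\<lambda>x. c \<cdot>\<^sub>m A x)"
proof (rule measurable_square_matI)
  fix j k assume jk: "j < n" "k < n"
  have "(\<lambda>x. c * A x $$ (j,k)) \<in> borel_measurable M"
    using measurable_square_matD(4)[OF A] jk by auto
  then show "(\<lambda>x. (c \<cdot>\<^sub>m A x) $$ (j,k)) \<in> borel_measurable M"
    using measurable_square_matD(2,3)[OF A] jk by (subst measurable_cong) auto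
qed (use measurable_square_matD(1)[OF A] in auto)

lemma measurable_square_mat_transpose:
  assumes A: "measurable_square_mat n M A"
  shows "measurable_square_mat n M (\<lambda>x. transpose_mat (A x))"
proof (rule measurable_square_matI)
  fix j k assume jk: "j < n" "k < n"
  then show "(\<lambda>x. transpose_mat (A x) $$ (j,k)) \<in> borel_measurable M"
    using measurable_square_matD[OF A] by (subst measurable_cong[where g = "\<lambda>x. A x $$ (k,j)"]) auto
qed (use measurable_square_matD(1)[OF A] in auto)

lemma measurable_square_mat_pow:
  assumes A: "measurable_square_mat n M A"
  shows "measurable_square_mat n M (\<lambda>x. A x ^\<^sub>m l)"
proof (induction l)
  case 0
  show ?case
  proof (rule measurable_square_matI)
    fix j k assume jk: "j < n" "k < n"
    then show "(\<lambda>x. (A x ^\<^sub>m 0) $$ (j,k)) \<in> borel_measurable M"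
      using measurable_square_matD(2)[OF A]
      by (subst measurable_cong[where g = "\<lambda>x. if j = k then 1 else 0"]) auto
  qed (use measurable_square_matD(2)[OF A] in auto)
next
  case (Suc l)
  show ?case using measurable_square_mat_mult[OF Suc A] by simp
qed

lemma measurable_square_mat_mexp:
  assumes A: "measurable_square_mat n M A"
  shows "measurable_square_mat n M (\<lambda>x. mexp (A x))"
proof (rule measurable_square_matI)
  fix j k assume jk: "j < n" "k < n"
  show "(\<lambda>x. mexp (A x) $$ (j,k)) \<in> borel_measurable M"
  proof (rule borel_measurable_LIMSEQ_real)
    fix x assume x: "x \<in> space M"
    show "(\<lambda>N. \<Sum>l<N. (A x ^\<^sub>m l) $$ (j,k) / fact l) \<longlonglongrightarrow> mexp (A x) $$ (j,k)"
      unfolding index_mexp[OF measurable_square_matD(1)[OF A x] jk]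
      by (rule summable_LIMSEQ[OF summable_mexp_series[OF measurable_square_matD(1)[OF A x] jk]])
  next
    fix N
    show "(\<lambda>x. \<Sum>l<N. (A x ^\<^sub>m l) $$ (j,k) / fact l) \<in> borel_measurable M"
      using measurable_square_matD(4)[OF measurable_square_mat_pow[OF A] jk] by auto
  qed
qed (use measurable_square_matD(1)[OF A] mexp_carrier in auto)

lemma borel_measurable_rayleigh_sup:
  assumes A: "measurable_square_mat n M A"
  shows "(\<lambda>x. rayleigh_sup n (A x)) \<in> borel_measurable M"
proof -
  have "(\<lambda>x. rayleigh_quotient_rat n (A x) xs) \<in> borel_measurable M" for xs
  proof (cases "rat_vec n xs = 0\<^sub>v n")
    case False
    have u: "rat_vec n xs \<in> carrier_vec n" unfolding rat_vec_def by simp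
    have "(\<lambda>x. ereal ((\<Sum>i<n. \<Sum>j<n. A x $$ (i,j) * rat_vec n xs $ j * rat_vec n xs $ i)
        / (rat_vec n xs \<bullet> rat_vec n xs))) \<in> borel_measurable M"
      using measurable_square_matD(4)[OF A] by auto
    then show ?thesis
      by (rule measurable_cong[THEN iffD1, rotated])
        (simp add: rayleigh_quotient_rat_def False quadratic_form_eq_sum[OF measurable_square_matD(1)[OF A] u])
  qed (simp add: rayleigh_quotient_rat_def)
  then have "(\<lambda>x. SUP xs. rayleigh_quotient_rat n (A x) xs) \<in> borel_measurable M"
    by (intro borel_measurable_SUP) auto
  then show ?thesis
    using rayleigh_sup_eq_SUP_rat[OF measurable_square_matD(1)[OF A]] by (subst measurable_cong) auto
qed

lemma borel_measurable_rayleigh_inf: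
  assumes A: "measurable_square_mat n M A"
  shows "(\<lambda>x. rayleigh_inf n (A x)) \<in> borel_measurable M"
proof -
  have "(\<lambda>x. - rayleigh_sup n ((-1) \<cdot>\<^sub>m A x)) \<in> borel_measurable M"
    using borel_measurable_rayleigh_sup[OF measurable_square_mat_smult[OF A]] by simp
  then show ?thesis
    by (rule measurable_cong[THEN iffD1, rotated])
      (simp add: rayleigh_inf_eq_uminus_sup[OF measurable_square_matD(1)[OF A]])
qed

section \<open>Pointwise bounds for the random matrix field\<close>

lemma index_sym_mat_swap:
  fixes A :: "real mat"
  assumes "A \<in> carrier_mat n n" "transpose_mat A = A" "i < n" "j < n"
  shows "A $$ (j,i) = A $$ (i,j)"
  using assms by (metis index_transpose_mat(1) carrier_matD)

lemma G_mN_carrier: "G_mN n G0 G \<sigma> m \<eta> x \<in> carrier_mat n n"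
  unfolding G_mN_def by simp

lemma index_G_mN: "j < n \<Longrightarrow> k < n \<Longrightarrow> G_mN n G0 G \<sigma> m \<eta> x $$ (j,k) =
   G0 x $$ (j,k) + (\<Sum>i=1..m. sqrt (\<sigma> i) * G i x $$ (j,k) * \<eta> $ (i - 1))"
  unfolding G_mN_def by simp

lemma transpose_G_mN_sym:
  assumes "G0 x \<in> carrier_mat n n" "transpose_mat (G0 x) = G0 x"
    and "\<forall>i\<in>{1..m}. G i x \<in> carrier_mat n n \<and> transpose_mat (G i x) = G i x"
  shows "transpose_mat (G_mN n G0 G \<sigma> m \<eta> x) = G_mN n G0 G \<sigma> m \<eta> x"
proof (rule eq_matI)
  fix j k assume "j < dim_row (G_mN n G0 G \<sigma> m \<eta> x)" "k < dim_col (G_mN n G0 G \<sigma> m \<eta> x)"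
  then have jk: "j < n" "k < n" unfolding G_mN_def by auto
  have "transpose_mat (G_mN n G0 G \<sigma> m \<eta> x) $$ (j,k) = G_mN n G0 G \<sigma> m \<eta> x $$ (k,j)"
    using jk by (simp add: G_mN_def)
  also have "\<dots> = G_mN n G0 G \<sigma> m \<eta> x $$ (j,k)"
    unfolding index_G_mN[OF jk] index_G_mN[OF jk(2,1)]
    using index_sym_mat_swap[OF assms(1,2) jk] assms(3) index_sym_mat_swap[of "G _ x" n j k] jk
    by (auto intro!: sum.cong)
  finally show "transpose_mat (G_mN n G0 G \<sigma> m \<eta> x) $$ (j,k) = G_mN n G0 G \<sigma> m \<eta> x $$ (j,k)" .
qed (auto simp: G_mN_def)

lemma entry_bounded_G_mN:
  fixes \<eta> :: "real vec"
  assumes G0: "entry_bounded n (G0 x) c0" and G: "\<forall>i\<in>{1..m}. entry_bounded n (G i x) (cg i)"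
    and \<sigma>: "\<forall>i\<in>{1..m}. 0 \<le> \<sigma> i" and cg: "\<forall>i\<in>{1..m}. 0 \<le> cg i"
    and \<eta>: "\<forall>i\<in>{1..m}. \<bar>\<eta> $ (i - 1)\<bar> \<le> s"
  shows "entry_bounded n (G_mN n G0 G \<sigma> m \<eta> x) (c0 + (\<Sum>i=1..m. sqrt (\<sigma> i) * cg i) * s)"
  unfolding entry_bounded_def
proof (intro conjI allI impI G_mN_carrier)
  fix j k assume jk: "j < n" "k < n"
  have "\<bar>G_mN n G0 G \<sigma> m \<eta> x $$ (j,k)\<bar>
      \<le> \<bar>G0 x $$ (j,k)\<bar> + (\<Sum>i=1..m. sqrt (\<sigma> i) * (\<bar>G i x $$ (j,k)\<bar> * \<bar>\<eta> $ (i - 1)\<bar>))"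
    unfolding index_G_mN[OF jk] using \<sigma>
    by (intro order_trans[OF abs_triangle_ineq add_left_mono] order_trans[OF sum_abs] sum_mono)
      (simp add: abs_mult)
  also have "\<dots> \<le> c0 + (\<Sum>i=1..m. sqrt (\<sigma> i) * (cg i * s))"
    using jk entry_boundedD[OF G0] entry_boundedD[of n "G _ x" "cg _"] G \<sigma> cg \<eta>
    by (intro add_mono sum_mono mult_left_mono mult_mono) auto
  finally show "\<bar>G_mN n G0 G \<sigma> m \<eta> x $$ (j,k)\<bar> \<le> c0 + (\<Sum>i=1..m. sqrt (\<sigma> i) * cg i) * s"
    by (simp add: sum_distrib_right mult.assoc)
qed

lemma sqL_carrier: "sqL n h a G \<in> carrier_mat n n"
  unfolding sqL_def by simp

lemma index_sqL: "j < n \<Longrightarrow> k < n \<Longrightarrow> sqL n h a G $$ (j,k) = (if j < k then G $$ (j,k)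
      else if j = k then sqrt (h (G $$ (j,j)) (a j)) else 0)"
  unfolding sqL_def by simp

lemma entry_bounded_sqL:
  assumes G: "entry_bounded n G g" and g: "0 \<le> g" and c: "0 \<le> c"
    and h: "\<forall>j<n. \<forall>t. 0 \<le> h t (a j) \<and> h t (a j) \<le> c * (1 + t\<^sup>2)"
  shows "entry_bounded n (sqL n h a G) (g + sqrt c * (1 + g))"
  unfolding entry_bounded_def
proof (intro conjI allI impI sqL_carrier)
  fix j k assume jk: "j < n" "k < n"
  have diag: "sqrt (h (G $$ (j,j)) (a j)) \<le> sqrt c * (1 + g)"
  proof -
    have "(G $$ (j,j))\<^sup>2 \<le> g\<^sup>2"
      using entry_boundedD[OF G jk(1) jk(1)] g by (metis abs_le_square_iff abs_of_nonneg)
    then have "1 + (G $$ (j,j))\<^sup>2 \<le> (1 + g)\<^sup>2" using g by (simp add: power2_eq_square algebra_simps)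
    then have "h (G $$ (j,j)) (a j) \<le> c * (1 + g)\<^sup>2"
      using h jk c by (meson mult_left_mono order_trans)
    then have "sqrt (h (G $$ (j,j)) (a j)) \<le> sqrt (c * (1 + g)\<^sup>2)" by (rule real_sqrt_le_mono)
    then show ?thesis using g by (simp add: real_sqrt_mult)
  qed
  moreover have "0 \<le> sqrt c * (1 + g)" using c g by simp
  ultimately show "\<bar>sqL n h a G $$ (j,k)\<bar> \<le> g + sqrt c * (1 + g)"
    using entry_boundedD[OF G jk] h jk g by (auto simp: index_sqL)
qed

definition K0_bound :: "ktype \<Rightarrow> nat \<Rightarrow> real \<Rightarrow> real \<Rightarrow> real" where
  "K0_bound ty n c g = (case ty of ExpType \<Rightarrow> exp (n * g) | SqType \<Rightarrow> n * (g + sqrt c * (1 + g))\<^sup>2)"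

lemma K0_bound_nonneg: "0 \<le> K0_bound ty n c g"
  unfolding K0_bound_def by (cases ty) auto

lemma K0_carrier: "G \<in> carrier_mat n n \<Longrightarrow> K0 ty n h a G \<in> carrier_mat n n"
  using mexp_carrier sqL_carrier by (cases ty) (auto simp: K0_def intro!: mult_carrier_mat)

lemma entry_bounded_K0:
  assumes G: "entry_bounded n G g" and g: "0 \<le> g" and c: "0 \<le> c"
    and h: "\<forall>j<n. \<forall>t. 0 \<le> h t (a j) \<and> h t (a j) \<le> c * (1 + t\<^sup>2)"
  shows "entry_bounded n (K0 ty n h a G) (K0_bound ty n c g)"
proof (cases ty)
  case ExpType then show ?thesis
    using entry_bounded_mexp[OF G] unfolding K0_def K0_bound_def by simp
next
  case SqType
  note S = entry_bounded_sqL[OF G g c h]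
  show ?thesis
    using entry_bounded_mult[OF entry_bounded_transpose[OF S] S] SqType
    unfolding K0_def K0_bound_def by (simp add: power2_eq_square mult.assoc)
qed

lemma K0_quadratic_form_nonneg:
  assumes "G \<in> carrier_mat n n" "transpose_mat G = G" "w \<in> carrier_vec n"
  shows "0 \<le> (K0 ty n h a G *\<^sub>v w) \<bullet> w"
  using mexp_quadratic_form_nonneg[OF assms]
    quadratic_form_transpose_mult_nonneg[OF sqL_carrier assms(3)]
  by (cases ty) (auto simp: K0_def)

lemma abs_index_stiefel_transpose_mult_le:
  fixes Y :: "real mat" and P :: "real vec"
  assumes Y: "Y \<in> stiefel N m" and P: "P \<in> carrier_vec N" and r: "r < m"
  shows "\<bar>(transpose_mat Y *\<^sub>v P) $ r\<bar> \<le> sqrt (P \<bullet> P)"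
proof -
  have Yc: "Y \<in> carrier_mat N m" and YY: "transpose_mat Y * Y = 1\<^sub>m m"
    using Y unfolding stiefel_def by auto
  have "(transpose_mat Y *\<^sub>v P) $ r = (\<Sum>q<N. Y $$ (q,r) * P $ q)"
    using Yc P r by (auto simp: scalar_prod_def row_def atLeast0LessThan)
  moreover have "(\<Sum>q<N. (Y $$ (q,r))\<^sup>2) = 1"
  proof -
    have "(transpose_mat Y * Y) $$ (r,r) = (\<Sum>q<N. Y $$ (q,r) * Y $$ (q,r))"
      using Yc r by (auto simp: scalar_prod_def row_def col_def atLeast0LessThan)
    then show ?thesis using YY r by (simp add: power2_eq_square)
  qed
  ultimately have "((transpose_mat Y *\<^sub>v P) $ r)\<^sup>2 \<le> P \<bullet> P"
    using Cauchy_Schwarz_ineq_sum[of "\<lambda>q. Y $$ (q,r)" "\<lambda>q. P $ q" "{..<N}"]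
    by (simp add: scalar_prod_self_eq_sum[OF P])
  then show ?thesis using real_sqrt_le_mono by fastforce
qed

lemma entry_bounded_gram_factor:
  fixes L :: "real mat"
  assumes L: "L \<in> carrier_mat n n"
    and upper: "\<forall>v\<in>carrier_vec n. ((transpose_mat L * L) *\<^sub>v v) \<bullet> v \<le> c * (v \<bullet> v)"
  shows "entry_bounded n L (sqrt c)"
  unfolding entry_bounded_def
proof (intro conjI allI impI L)
  fix i j assume ij: "i < n" "j < n"
  have Lj: "L *\<^sub>v unit_vec n j \<in> carrier_vec n" using L by simp
  have "(L $$ (i,j))\<^sup>2 \<le> (\<Sum>l<n. ((L *\<^sub>v unit_vec n j) $ l)\<^sup>2)"
    using member_le_sum[of i "{..<n}" "\<lambda>l. ((L *\<^sub>v unit_vec n j) $ l)\<^sup>2"] ij L by simp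
  also have "\<dots> = ((transpose_mat L * L) *\<^sub>v unit_vec n j) \<bullet> unit_vec n j"
    by (simp add: quadratic_form_transpose_mult[OF L] scalar_prod_self_eq_sum[OF Lj])
  also have "\<dots> \<le> c" using upper[rule_format, of "unit_vec n j"] ij by simp
  finally show "\<bar>L $$ (i,j)\<bar> \<le> sqrt c" using real_sqrt_le_mono by fastforce
qed

lemma rayleigh_bounds_congruence:
  fixes L X :: "real mat"
  assumes L: "entry_bounded n L l"
    and lower: "\<forall>v\<in>carrier_vec n. k0 * (v \<bullet> v) \<le> ((transpose_mat L * L) *\<^sub>v v) \<bullet> v"
    and X: "entry_bounded n X b" and X_lower: "\<forall>w\<in>carrier_vec n. \<epsilon> * (w \<bullet> w) \<le> (X *\<^sub>v w) \<bullet> w"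
    and c: "0 \<le> c" and \<epsilon>: "0 \<le> \<epsilon>"
  shows "ereal (c * \<epsilon> * k0) \<le> rayleigh_inf n (c \<cdot>\<^sub>m (transpose_mat L * X * L))"
    and "rayleigh_sup n (c \<cdot>\<^sub>m (transpose_mat L * X * L)) \<le> ereal (c * n ^ 3 * l\<^sup>2 * b)"
proof -
  have Lc: "L \<in> carrier_mat n n" and Xc: "X \<in> carrier_mat n n"
    using L X by (auto simp: entry_bounded_def)
  show "ereal (c * \<epsilon> * k0) \<le> rayleigh_inf n (c \<cdot>\<^sub>m (transpose_mat L * X * L))"
  proof (rule rayleigh_inf_geI)
    fix v :: "real vec" assume v: "v \<in> carrier_vec n"
    have Lv: "L *\<^sub>v v \<in> carrier_vec n" using Lc v by simp
    have "k0 * (v \<bullet> v) \<le> (L *\<^sub>v v) \<bullet> (L *\<^sub>v v)"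
      using lower[rule_format, OF v] quadratic_form_transpose_mult[OF Lc v] by simp
    then have "\<epsilon> * (k0 * (v \<bullet> v)) \<le> (X *\<^sub>v (L *\<^sub>v v)) \<bullet> (L *\<^sub>v v)"
      using X_lower Lv \<epsilon> by (meson mult_left_mono order_trans)
    then show "c * \<epsilon> * k0 * (v \<bullet> v) \<le> ((c \<cdot>\<^sub>m (transpose_mat L * X * L)) *\<^sub>v v) \<bullet> v"
      unfolding quadratic_form_congruence[OF Lc Xc v] using c
      by (metis mult.assoc mult_left_mono)
  qed
  have "entry_bounded n (c \<cdot>\<^sub>m (transpose_mat L * X * L)) (\<bar>c\<bar> * (n * (n * l * b) * l))"
    by (intro entry_bounded_smult entry_bounded_mult entry_bounded_transpose L X)
  then have "entry_bounded n (c \<cdot>\<^sub>m (transpose_mat L * X * L)) (c * n\<^sup>2 * l\<^sup>2 * b)"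
    using c by (simp add: power2_eq_square mult_ac)
  then show "rayleigh_sup n (c \<cdot>\<^sub>m (transpose_mat L * X * L)) \<le> ereal (c * n ^ 3 * l\<^sup>2 * b)"
    by (intro rayleigh_sup_leI)
      (auto dest!: abs_quadratic_form_le simp: power2_eq_square power3_eq_cube mult_ac)
qed

lemma measurable_square_mat_G_mN:
  assumes "measurable_square_mat n M G0" "\<forall>i\<in>{1..m}. measurable_square_mat n M (G i)"
  shows "measurable_square_mat n M (\<lambda>x. G_mN n G0 G \<sigma> m \<eta> x)"
proof (rule measurable_square_matI[OF G_mN_carrier])
  fix j k assume jk: "j < n" "k < n"
  have "(\<lambda>x. G0 x $$ (j,k) + (\<Sum>i=1..m. sqrt (\<sigma> i) * G i x $$ (j,k) * \<eta> $ (i - 1)))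
      \<in> borel_measurable M"
    using assms jk
    by (intro borel_measurable_add borel_measurable_sum borel_measurable_times borel_measurable_const)
      (auto dest: measurable_square_matD(4))
  then show "(\<lambda>x. G_mN n G0 G \<sigma> m \<eta> x $$ (j,k)) \<in> borel_measurable M"
    unfolding index_G_mN[OF jk] .
qed

lemma measurable_square_mat_sqL:
  assumes G: "measurable_square_mat n M G" and h: "\<forall>j<n. (\<lambda>g. h g (a j)) \<in> borel_measurable borel"
  shows "measurable_square_mat n M (\<lambda>x. sqL n h a (G x))"
proof (rule measurable_square_matI[OF sqL_carrier])
  fix j k assume jk: "j < n" "k < n"
  have "(\<lambda>x. h (G x $$ (j,j)) (a j)) \<in> borel_measurable M"
    using measurable_compose[OF measurable_square_matD(4)[OF G jk(1) jk(1)] h[rule_format, OF jk(1)]] .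
  then show "(\<lambda>x. sqL n h a (G x) $$ (j,k)) \<in> borel_measurable M"
    unfolding index_sqL[OF jk] using measurable_square_matD(4)[OF G jk] by simp
qed

lemma measurable_square_mat_K0:
  assumes G: "measurable_square_mat n M G" and h: "\<forall>j<n. (\<lambda>g. h g (a j)) \<in> borel_measurable borel"
  shows "measurable_square_mat n M (\<lambda>x. K0 ty n h a (G x))"
  using measurable_square_mat_mexp[OF G] measurable_square_mat_sqL[OF G h]
    measurable_square_mat_mult[OF measurable_square_mat_transpose[OF measurable_square_mat_sqL[OF G h]]]
  by (cases ty) (auto simp: K0_def)

lemma measurable_square_mat_K_mN:
  assumes "measurable_square_mat n M L" "measurable_square_mat n M G0"
    and "\<forall>i\<in>{1..m}. measurable_square_mat n M (G i)"
    and "\<forall>j<n. (\<lambda>g. h g (a j)) \<in> borel_measurable borel"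
  shows "measurable_square_mat n M (\<lambda>x. K_mN ty n h a \<epsilon> L G0 G \<sigma> \<Psi> m x y Y)"
  unfolding K_mN_def
  by (intro measurable_square_mat_smult measurable_square_mat_mult measurable_square_mat_transpose
      measurable_square_mat_add measurable_square_mat_const
      measurable_square_mat_K0[OF measurable_square_mat_G_mN] assms) auto

lemma entry_bounded_G_mN_stiefel:
  fixes Y :: "real mat" and P :: "real vec"
  assumes G0: "G0 x \<in> carrier_mat n n" "frob (G0 x) \<le> c0"
    and G: "\<forall>i\<in>{1..m}. G i x \<in> carrier_mat n n \<and> frob (G i x) \<le> cg i"
    and \<sigma>: "\<forall>i\<in>{1..m}. 0 \<le> \<sigma> i" and Y: "Y \<in> stiefel N m" and P: "P \<in> carrier_vec N"
  shows "entry_bounded n (G_mN n G0 G \<sigma> m (transpose_mat Y *\<^sub>v P) x)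
      (c0 + (\<Sum>i=1..m. sqrt (\<sigma> i) * cg i) * sqrt (P \<bullet> P))"
proof (rule entry_bounded_G_mN)
  show "entry_bounded n (G0 x) c0" by (rule entry_bounded_frob[OF G0])
  show "\<forall>i\<in>{1..m}. entry_bounded n (G i x) (cg i)" and "\<forall>i\<in>{1..m}. 0 \<le> cg i"
    using G entry_bounded_frob frob_nonneg order_trans by blast+
  show "\<forall>i\<in>{1..m}. 0 \<le> \<sigma> i" by (rule \<sigma>)
  show "\<forall>i\<in>{1..m}. \<bar>(transpose_mat Y *\<^sub>v P) $ (i - 1)\<bar> \<le> sqrt (P \<bullet> P)"
    using abs_index_stiefel_transpose_mult_le[OF Y P] by auto
qed

lemma shifted_K0_bounds:
  fixes G :: "real mat"
  assumes G: "entry_bounded n G g" "transpose_mat G = G" and g: "0 \<le> g"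
    and c: "0 \<le> c" "\<forall>j<n. \<forall>t. 0 \<le> h t (a j) \<and> h t (a j) \<le> c * (1 + t\<^sup>2)" and \<epsilon>: "0 \<le> \<epsilon>"
  shows "entry_bounded n (\<epsilon> \<cdot>\<^sub>m 1\<^sub>m n + K0 ty n h a G) (\<epsilon> + K0_bound ty n c g)"
    and "\<forall>w\<in>carrier_vec n. \<epsilon> * (w \<bullet> w) \<le> ((\<epsilon> \<cdot>\<^sub>m 1\<^sub>m n + K0 ty n h a G) *\<^sub>v w) \<bullet> w"
proof -
  show "entry_bounded n (\<epsilon> \<cdot>\<^sub>m 1\<^sub>m n + K0 ty n h a G) (\<epsilon> + K0_bound ty n c g)"
    using entry_bounded_add[OF entry_bounded_smult[OF entry_bounded_one, where s = \<epsilon>]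
        entry_bounded_K0[OF G(1) g c, where ty = ty]] \<epsilon>
    by simp
  have K0: "K0 ty n h a G \<in> carrier_mat n n" by (rule K0_carrier[OF entry_bounded_carrier[OF G(1)]])
  show "\<forall>w\<in>carrier_vec n. \<epsilon> * (w \<bullet> w) \<le> ((\<epsilon> \<cdot>\<^sub>m 1\<^sub>m n + K0 ty n h a G) *\<^sub>v w) \<bullet> w"
  proof
    fix w :: "real vec" assume w: "w \<in> carrier_vec n"
    have "(\<epsilon> \<cdot>\<^sub>m 1\<^sub>m n + K0 ty n h a G) *\<^sub>v w = (\<epsilon> \<cdot>\<^sub>m 1\<^sub>m n) *\<^sub>v w + K0 ty n h a G *\<^sub>v w"
      by (rule add_mult_distrib_mat_vec[OF _ K0 w]) simp
    also have "(\<epsilon> \<cdot>\<^sub>m 1\<^sub>m n) *\<^sub>v w = \<epsilon> \<cdot>\<^sub>v w" using w by (intro eq_vecI) auto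
    finally have "((\<epsilon> \<cdot>\<^sub>m 1\<^sub>m n + K0 ty n h a G) *\<^sub>v w) \<bullet> w = \<epsilon> * (w \<bullet> w) + (K0 ty n h a G *\<^sub>v w) \<bullet> w"
      using w K0 by (simp add: add_scalar_prod_distrib[of _ n])
    then show "\<epsilon> * (w \<bullet> w) \<le> ((\<epsilon> \<cdot>\<^sub>m 1\<^sub>m n + K0 ty n h a G) *\<^sub>v w) \<bullet> w"
      using K0_quadratic_form_nonneg[OF entry_bounded_carrier[OF G(1)] G(2) w] by simp
  qed
qed

lemma K_mN_rayleigh_bounds:
  fixes K L G0 :: "'d \<Rightarrow> real mat" and G :: "nat \<Rightarrow> 'd \<Rightarrow> real mat"
    and \<Psi> :: "(nat \<Rightarrow> real) \<Rightarrow> real vec" and Y :: "real mat"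
  assumes \<epsilon>: "0 < \<epsilon>" and k1: "0 \<le> k1"
    and K: "K x \<in> carrier_mat n n \<and> (\<forall>v\<in>carrier_vec n. k0 * (v \<bullet> v) \<le> (K x *\<^sub>v v) \<bullet> v
                                  \<and> (K x *\<^sub>v v) \<bullet> v \<le> k1 / sqrt (real n) * (v \<bullet> v))"
    and L: "L x \<in> carrier_mat n n" "K x = transpose_mat (L x) * L x"
    and G0: "G0 x \<in> carrier_mat n n" "transpose_mat (G0 x) = G0 x" "frob (G0 x) \<le> c0"
    and G: "\<forall>i\<in>{1..m}. G i x \<in> carrier_mat n n \<and> transpose_mat (G i x) = G i x \<and> frob (G i x) \<le> cg i"
    and \<sigma>: "\<forall>i\<in>{1..m}. 0 \<le> \<sigma> i"
    and c: "0 \<le> c" "\<forall>j<n. \<forall>t. 0 \<le> h t (a j) \<and> h t (a j) \<le> c * (1 + t\<^sup>2)"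
    and Y: "Y \<in> stiefel N m" and \<Psi>: "\<Psi> y \<in> carrier_vec N"
  defines "g \<equiv> c0 + (\<Sum>i=1..m. sqrt (\<sigma> i) * cg i) * sqrt (\<Psi> y \<bullet> \<Psi> y)"
  shows "ereal (\<epsilon> * k0 / (1 + \<epsilon>)) \<le> rayleigh_inf n (K_mN ty n h a \<epsilon> L G0 G \<sigma> \<Psi> m x y Y)"
    and "rayleigh_sup n (K_mN ty n h a \<epsilon> L G0 G \<sigma> \<Psi> m x y Y)
      \<le> ereal (real n ^ 3 * (k1 / sqrt n) / (1 + \<epsilon>) * (\<epsilon> + K0_bound ty n c g))"
proof -
  define Gm where "Gm = G_mN n G0 G \<sigma> m (transpose_mat Y *\<^sub>v \<Psi> y) x"
  have "0 \<le> c0" "\<forall>i\<in>{1..m}. 0 \<le> cg i" using G0(3) G frob_nonneg order_trans by blast+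
  moreover have "0 \<le> \<Psi> y \<bullet> \<Psi> y" using scalar_prod_self_eq_sum[OF \<Psi>] by (simp add: sum_nonneg)
  ultimately have g: "0 \<le> g"
    unfolding g_def using \<sigma> by (intro add_nonneg_nonneg mult_nonneg_nonneg sum_nonneg) auto
  have Gm: "entry_bounded n Gm g"
    unfolding Gm_def g_def by (rule entry_bounded_G_mN_stiefel) (use G0 G \<sigma> Y \<Psi> in auto)
  have Gm_sym: "transpose_mat Gm = Gm"
    unfolding Gm_def using G G0 by (intro transpose_G_mN_sym) auto
  note X = shifted_K0_bounds[where ty = ty, OF Gm Gm_sym g c less_imp_le[OF \<epsilon>]]
  have L_bounded: "entry_bounded n (L x) (sqrt (k1 / sqrt n))"
    using K L by (intro entry_bounded_gram_factor) auto
  have L_lower: "\<forall>v\<in>carrier_vec n. k0 * (v \<bullet> v) \<le> ((transpose_mat (L x) * L x) *\<^sub>v v) \<bullet> v"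
    using K L by auto
  have C: "K_mN ty n h a \<epsilon> L G0 G \<sigma> \<Psi> m x y Y
      = (1 / (1 + \<epsilon>)) \<cdot>\<^sub>m (transpose_mat (L x) * (\<epsilon> \<cdot>\<^sub>m 1\<^sub>m n + K0 ty n h a Gm) * L x)"
    unfolding K_mN_def Gm_def ..
  note bounds = rayleigh_bounds_congruence[OF L_bounded L_lower X(1) X(2), of "1 / (1 + \<epsilon>)"]
  show "ereal (\<epsilon> * k0 / (1 + \<epsilon>)) \<le> rayleigh_inf n (K_mN ty n h a \<epsilon> L G0 G \<sigma> \<Psi> m x y Y)"
    using bounds(1) \<epsilon> unfolding C by (simp add: field_simps)
  show "rayleigh_sup n (K_mN ty n h a \<epsilon> L G0 G \<sigma> \<Psi> m x y Y)
      \<le> ereal (real n ^ 3 * (k1 / sqrt n) / (1 + \<epsilon>) * (\<epsilon> + K0_bound ty n c g))"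
    using bounds(2) \<epsilon> k1 unfolding C by (simp add: field_simps)
qed

lemma le_essinf_AE:
  fixes f :: "'a \<Rightarrow> ereal"
  assumes "f \<in> borel_measurable M" "AE x in M. c \<le> f x"
  shows "c \<le> essinf M f"
proof -
  have "esssup M (\<lambda>x. - f x) \<le> - c"
    using assms by (intro esssup_I) (auto elim!: eventually_mono)
  then show ?thesis unfolding essinf_def by (metis ereal_minus_le_minus ereal_uminus_uminus)
qed

lemma K_mN_essential_rayleigh_bounds:
  fixes K L G0 :: "'d \<Rightarrow> real mat" and G :: "nat \<Rightarrow> 'd \<Rightarrow> real mat"
    and \<Psi> :: "(nat \<Rightarrow> real) \<Rightarrow> real vec" and Y :: "real mat"
  assumes M: "space M = D" and \<epsilon>: "0 < \<epsilon>" and k1: "0 \<le> k1"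
    and K: "\<forall>x\<in>D. K x \<in> carrier_mat n n \<and>
              (\<forall>v\<in>carrier_vec n. k0 * (v \<bullet> v) \<le> (K x *\<^sub>v v) \<bullet> v
                                  \<and> (K x *\<^sub>v v) \<bullet> v \<le> k1 / sqrt (real n) * (v \<bullet> v))"
    and L: "\<forall>x\<in>D. L x \<in> carrier_mat n n \<and> K x = transpose_mat (L x) * L x"
      "mat_measurable n M L"
    and G0: "sym_field n D G0" "mat_measurable n M G0"
    and G: "\<forall>i\<in>{1..m}. sym_field n D (G i) \<and> mat_measurable n M (G i)"
    and frob: "AE x in M. frob (G0 x) \<le> c0 \<and> (\<forall>i\<in>{1..m}. frob (G i x) \<le> cg i)"
    and \<sigma>: "\<forall>i\<in>{1..m}. 0 \<le> \<sigma> i"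
    and h: "\<forall>j<n. (\<lambda>g. h g (a j)) \<in> borel_measurable borel"
    and c: "0 \<le> c" "\<forall>j<n. \<forall>t. 0 \<le> h t (a j) \<and> h t (a j) \<le> c * (1 + t\<^sup>2)"
    and Y: "Y \<in> stiefel N m" and \<Psi>: "\<Psi> y \<in> carrier_vec N"
  defines "g \<equiv> c0 + (\<Sum>i=1..m. sqrt (\<sigma> i) * cg i) * sqrt (\<Psi> y \<bullet> \<Psi> y)"
  shows "ereal (\<epsilon> * k0 / (1 + \<epsilon>)) \<le> essinf M (\<lambda>x. rayleigh_inf n (K_mN ty n h a \<epsilon> L G0 G \<sigma> \<Psi> m x y Y))
      \<and> esssup M (\<lambda>x. rayleigh_sup n (K_mN ty n h a \<epsilon> L G0 G \<sigma> \<Psi> m x y Y))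
          \<le> ereal (real n ^ 3 * (k1 / sqrt n) / (1 + \<epsilon>) * (\<epsilon> + K0_bound ty n c g))"
proof -
  have "measurable_square_mat n M (\<lambda>x. K_mN ty n h a \<epsilon> L G0 G \<sigma> \<Psi> m x y Y)"
    using L G0 G h
    by (intro measurable_square_mat_K_mN) (auto simp: measurable_square_mat_def sym_field_def M)
  moreover have "AE x in M. ereal (\<epsilon> * k0 / (1 + \<epsilon>)) \<le> rayleigh_inf n (K_mN ty n h a \<epsilon> L G0 G \<sigma> \<Psi> m x y Y)
      \<and> rayleigh_sup n (K_mN ty n h a \<epsilon> L G0 G \<sigma> \<Psi> m x y Y)
          \<le> ereal (real n ^ 3 * (k1 / sqrt n) / (1 + \<epsilon>) * (\<epsilon> + K0_bound ty n c g))"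
    using frob AE_space
  proof eventually_elim
    case (elim x)
    then have x: "x \<in> D" and frob_x: "frob (G0 x) \<le> c0" using M by auto
    have L_x: "L x \<in> carrier_mat n n" "K x = transpose_mat (L x) * L x"
      and G0_x: "G0 x \<in> carrier_mat n n" "transpose_mat (G0 x) = G0 x"
      using L(1) G0(1) x unfolding sym_field_def by auto
    have G_x: "\<forall>i\<in>{1..m}. G i x \<in> carrier_mat n n \<and> transpose_mat (G i x) = G i x
        \<and> frob (G i x) \<le> cg i"
      using G elim x unfolding sym_field_def by auto
    show ?case
      using K_mN_rayleigh_bounds[where K = K and L = L and ?G0.0 = G0 and G = G and x = x and h = h and a = a
          and \<Psi> = \<Psi> and \<sigma> = \<sigma> and cg = cg,
          OF \<epsilon> k1 K[rule_format, OF x] L_x G0_x frob_x G_x \<sigma> c Y \<Psi>]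
      unfolding g_def by simp
  qed
  ultimately show ?thesis
    by (auto intro!: le_essinf_AE esssup_I borel_measurable_rayleigh_inf borel_measurable_rayleigh_sup
        elim: eventually_mono)
qed

section \<open>Square integrability of the Hermite chaos\<close>

lemma borel_measurable_hermite [measurable]: "hermite k \<in> borel_measurable borel"
proof (induction k rule: less_induct)
  case (less k)
  consider "k = 0" | "k = Suc 0" | k' where "k = Suc (Suc k')" by (metis not0_implies_Suc)
  then show ?case
  proof cases
    case 3
    have [measurable]: "hermite (Suc k') \<in> borel_measurable borel" "hermite k' \<in> borel_measurable borel"
      using less 3 by auto
    have "(\<lambda>x. x * hermite (Suc k') x - real (Suc k') * hermite k' x) \<in> borel_measurable borel"
      by measurable
    then show ?thesis using 3 by simp
  qed simp_all
qed

lemma borel_measurable_hermite_norm [measurable]: "hermite_norm k \<in> borel_measurable borel"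
  unfolding hermite_norm_def[abs_def] by measurable

lemma abs_hermite_le: "\<bar>hermite k x\<bar> \<le> fact (Suc k) * (1 + \<bar>x\<bar>) ^ k"
proof (induction k x rule: hermite.induct)
  case (3 k x)
  define t where "t = 1 + \<bar>x\<bar>"
  have t: "1 \<le> t" "\<bar>x\<bar> \<le> t" unfolding t_def by auto
  have "\<bar>hermite (Suc (Suc k)) x\<bar> \<le> \<bar>x\<bar> * \<bar>hermite (Suc k) x\<bar> + real (Suc k) * \<bar>hermite k x\<bar>"
    by (simp add: abs_mult abs_triangle_ineq4[THEN order_trans])
  also have "\<dots> \<le> t * (fact (Suc (Suc k)) * t ^ Suc k) + real (Suc k) * (fact (Suc k) * t ^ k)"
    using 3 t unfolding t_def[symmetric] by (intro add_mono mult_mono) auto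
  also have "\<dots> \<le> t * (fact (Suc (Suc k)) * t ^ Suc k) + real (Suc k) * (fact (Suc k) * t ^ Suc (Suc k))"
    using power_increasing[of k "Suc (Suc k)" t] t by (intro add_left_mono mult_left_mono) auto
  also have "\<dots> = (fact (Suc (Suc k)) + real (Suc k) * fact (Suc k)) * t ^ Suc (Suc k)"
    by (simp add: algebra_simps)
  also have "\<dots> \<le> fact (Suc (Suc (Suc k))) * t ^ Suc (Suc k)"
  proof (rule mult_right_mono)
    have "real (Suc k) * fact (Suc k) \<le> fact (Suc (Suc k))"
      by (simp add: fact_Suc[of "Suc k"] mult_right_mono)
    then show "fact (Suc (Suc k)) + real (Suc k) * fact (Suc k) \<le> (fact (Suc (Suc (Suc k))) :: real)"
      by (simp add: fact_Suc[of "Suc (Suc k)"] algebra_simps)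
  qed (use t in simp)
  finally show ?case unfolding t_def .
qed simp_all

lemma one_plus_abs_pow_le: "(1 + \<bar>x::real\<bar>) ^ (2 * k) \<le> 4 ^ k * (1 + x ^ (2 * k))"
proof (cases "\<bar>x\<bar> \<le> 1")
  case True
  have "(1 + \<bar>x\<bar>) ^ (2 * k) \<le> 2 ^ (2 * k)" by (rule power_mono) (use True in auto)
  also have "\<dots> = 4 ^ k" by (simp add: power_mult)
  also have "\<dots> \<le> 4 ^ k * (1 + x ^ (2 * k))" by (simp add: power_mult)
  finally show ?thesis .
next
  case False
  have "(1 + \<bar>x\<bar>) ^ (2 * k) \<le> (2 * \<bar>x\<bar>) ^ (2 * k)" by (rule power_mono) (use False in auto)
  also have "\<dots> = 4 ^ k * x ^ (2 * k)"
    by (simp add: power_mult_distrib power_mult power2_abs)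
  also have "\<dots> \<le> 4 ^ k * (1 + x ^ (2 * k))" by (simp add: power_mult)
  finally show ?thesis .
qed

lemma hermite_norm_sq_le: "(hermite_norm k x)\<^sup>2 \<le> (fact (Suc k))\<^sup>2 * 4 ^ k * (1 + x ^ (2 * k))"
proof -
  have "(hermite_norm k x)\<^sup>2 = (hermite k x)\<^sup>2 / fact k"
    unfolding hermite_norm_def by (simp add: power_divide)
  also have "\<dots> \<le> (hermite k x)\<^sup>2"
    using divide_left_mono[of 1 "fact k" "(hermite k x)\<^sup>2"] fact_ge_1[of k] by simp
  also have "\<dots> \<le> (fact (Suc k))\<^sup>2 * (1 + \<bar>x\<bar>) ^ (2 * k)"
    using power_mono[OF abs_hermite_le[of k x], of 2]
    by (simp add: power_mult_distrib power_mult[symmetric] mult.commute)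
  also have "\<dots> \<le> (fact (Suc k))\<^sup>2 * (4 ^ k * (1 + x ^ (2 * k)))"
    by (intro mult_left_mono one_plus_abs_pow_le) auto
  finally show ?thesis by (simp add: mult.assoc)
qed

lemma prob_space_std_normal: "prob_space std_normal_distribution"
  using prob_space_normal_density[of 1 0] by simp

text \<open>Polynomial growth suffices since the standard Gaussian has all moments.\<close>
lemma nn_integral_hermite_norm_sq_finite:
  "(\<integral>\<^sup>+ x. ennreal ((hermite_norm k x)\<^sup>2) \<partial>std_normal_distribution) < \<infinity>"
proof -
  define c :: real where "c = (fact (Suc k))\<^sup>2 * 4 ^ k"
  define f where "f x = c * (std_normal_density x * x ^ (2 * 0) + std_normal_density x * x ^ (2 * k))" for x
  have "integrable lborel f"
    unfolding f_def using std_normal_moment_even[of 0] std_normal_moment_even[of k]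
    by (intro integrable_mult_right Bochner_Integration.integrable_add integrable.intros)
  moreover have "0 \<le> c" unfolding c_def by simp
  ultimately have f: "(\<integral>\<^sup>+ x. ennreal (f x) \<partial>lborel) < \<infinity>"
    by (subst nn_integral_eq_integral) (auto simp: f_def)
  have "(\<integral>\<^sup>+ x. ennreal ((hermite_norm k x)\<^sup>2) \<partial>std_normal_distribution)
      = (\<integral>\<^sup>+ x. ennreal (std_normal_density x) * ennreal ((hermite_norm k x)\<^sup>2) \<partial>lborel)"
    by (rule nn_integral_density) measurable
  also have "\<dots> \<le> (\<integral>\<^sup>+ x. ennreal (f x) \<partial>lborel)"
  proof (rule nn_integral_mono)
    fix x
    have "std_normal_density x * (hermite_norm k x)\<^sup>2 \<le> std_normal_density x * (c * (1 + x ^ (2 * k)))"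
      using hermite_norm_sq_le[of k x] unfolding c_def by (intro mult_left_mono) (auto simp: mult.assoc)
    then show "ennreal (std_normal_density x) * ennreal ((hermite_norm k x)\<^sup>2) \<le> ennreal (f x)"
      unfolding f_def by (simp add: ennreal_mult'[symmetric] ennreal_leI algebra_simps)
  qed
  finally show ?thesis using f by simp
qed

lemma prob_space_gauss: "prob_space (gauss Ng)"
  unfolding gauss_def by (rule prob_space_PiM) (rule prob_space_std_normal)

lemma nn_integral_prod_hermite_norm_sq_finite:
  "(\<integral>\<^sup>+ y. ennreal ((\<Prod>k<Ng. hermite_norm (b k) (y k))\<^sup>2) \<partial>gauss Ng) < \<infinity>"
proof -
  interpret product_sigma_finite "\<lambda>_. std_normal_distribution"
    unfolding product_sigma_finite_def using prob_space_std_normal prob_space_imp_sigma_finite by blast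
  have "(\<integral>\<^sup>+ y. ennreal ((\<Prod>k<Ng. hermite_norm (b k) (y k))\<^sup>2) \<partial>gauss Ng)
     = (\<integral>\<^sup>+ y. (\<Prod>k\<in>{..<Ng}. ennreal ((hermite_norm (b k) (y k))\<^sup>2)) \<partial>gauss Ng)"
    by (rule nn_integral_cong) (simp add: prod_ennreal power_mult_distrib prod_power_distrib)
  also have "\<dots> = (\<Prod>k\<in>{..<Ng}. \<integral>\<^sup>+ t. ennreal ((hermite_norm (b k) t)\<^sup>2) \<partial>std_normal_distribution)"
    unfolding gauss_def by (rule product_nn_integral_prod) auto
  also have "\<dots> \<noteq> \<top>"
    by (subst ennreal_prod_eq_top) (use nn_integral_hermite_norm_sq_finite in \<open>auto simp: less_top\<close>)
  finally show ?thesis by (simp add: less_top)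
qed

lemma Psi_carrier: "Psi Ng \<beta> N y \<in> carrier_vec N"
  unfolding Psi_def by simp

lemma Psi_scalar_prod_self:
  "Psi Ng \<beta> N y \<bullet> Psi Ng \<beta> N y = (\<Sum>q<N. (\<Prod>k<Ng. hermite_norm (\<beta> q k) (y k))\<^sup>2)"
  unfolding scalar_prod_self_eq_sum[OF Psi_carrier] by (simp add: Psi_def)

lemma borel_measurable_Psi_norm [measurable]:
  "(\<lambda>y. Psi Ng \<beta> N y \<bullet> Psi Ng \<beta> N y) \<in> borel_measurable (gauss Ng)"
  unfolding Psi_scalar_prod_self gauss_def by measurable

lemma nn_integral_Psi_norm_finite:
  "(\<integral>\<^sup>+ y. ennreal (Psi Ng \<beta> N y \<bullet> Psi Ng \<beta> N y) \<partial>gauss Ng) < \<infinity>"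
proof -
  have "(\<integral>\<^sup>+ y. ennreal (Psi Ng \<beta> N y \<bullet> Psi Ng \<beta> N y) \<partial>gauss Ng)
      = (\<Sum>q<N. \<integral>\<^sup>+ y. ennreal ((\<Prod>k<Ng. hermite_norm (\<beta> q k) (y k))\<^sup>2) \<partial>gauss Ng)"
    unfolding Psi_scalar_prod_self
    by (subst sum_ennreal[symmetric], simp, rule nn_integral_sum) (auto simp: gauss_def)
  also have "\<dots> < \<infinity>"
    using nn_integral_prod_hermite_norm_sq_finite by (simp add: less_top ennreal_sum_eq_top)
  finally show ?thesis .
qed

section \<open>Integrability of the upper bound\<close>

lemma K0_bound_SqType_le:
  fixes c c0 d S :: real
  assumes "0 \<le> S"
  defines "e \<equiv> (1 + sqrt c) * c0 + sqrt c" and "f \<equiv> (1 + sqrt c) * d"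
  shows "K0_bound SqType n c (c0 + d * sqrt S) \<le> n * (2 * e\<^sup>2) + n * (2 * f\<^sup>2) * S"
proof -
  have "(c0 + d * sqrt S + sqrt c * (1 + (c0 + d * sqrt S)))\<^sup>2 = (e + f * sqrt S)\<^sup>2"
    unfolding e_def f_def by (simp add: algebra_simps)
  also have "\<dots> \<le> 2 * e\<^sup>2 + 2 * f\<^sup>2 * (sqrt S)\<^sup>2"
    using zero_le_power2[of "e - f * sqrt S"] by (simp add: power2_eq_square algebra_simps)
  finally have "(c0 + d * sqrt S + sqrt c * (1 + (c0 + d * sqrt S)))\<^sup>2 \<le> 2 * e\<^sup>2 + 2 * f\<^sup>2 * S"
    using assms(1) by simp
  from mult_left_mono[OF this, of "real n"] show ?thesis
    by (simp only: K0_bound_def ktype.case distrib_left mult.assoc)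
qed

lemma nn_integral_K0_bound_SqType_finite:
  assumes M: "prob_space M" and S: "S \<in> borel_measurable M" "\<And>y. 0 \<le> S y"
    "(\<integral>\<^sup>+ y. ennreal (S y) \<partial>M) < \<infinity>"
    and P: "0 \<le> P" and \<epsilon>: "0 \<le> \<epsilon>"
  shows "(\<integral>\<^sup>+ y. ennreal (P * (\<epsilon> + K0_bound SqType n c (c0 + d * sqrt (S y)))) \<partial>M) < \<infinity>"
proof -
  interpret prob_space M by (rule M)
  define A where "A = P * (\<epsilon> + n * (2 * ((1 + sqrt c) * c0 + sqrt c)\<^sup>2))"
  define B where "B = P * (n * (2 * ((1 + sqrt c) * d)\<^sup>2))"
  have AB: "0 \<le> A" "0 \<le> B" unfolding A_def B_def using P \<epsilon> by auto
  have "(\<integral>\<^sup>+ y. ennreal (P * (\<epsilon> + K0_bound SqType n c (c0 + d * sqrt (S y)))) \<partial>M)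
      \<le> (\<integral>\<^sup>+ y. ennreal A + ennreal B * ennreal (S y) \<partial>M)"
  proof (rule nn_integral_mono)
    fix y
    have "P * K0_bound SqType n c (c0 + d * sqrt (S y))
        \<le> P * (n * (2 * ((1 + sqrt c) * c0 + sqrt c)\<^sup>2) + n * (2 * ((1 + sqrt c) * d)\<^sup>2) * S y)"
      by (rule mult_left_mono[OF K0_bound_SqType_le[OF S(2)] P])
    then have "P * (\<epsilon> + K0_bound SqType n c (c0 + d * sqrt (S y))) \<le> A + B * S y"
      unfolding A_def B_def by (simp only: distrib_left mult.assoc)
    then have "ennreal (P * (\<epsilon> + K0_bound SqType n c (c0 + d * sqrt (S y)))) \<le> ennreal (A + B * S y)"
      by (rule ennreal_leI)
    also have "\<dots> = ennreal A + ennreal B * ennreal (S y)"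
      using AB S(2) by (simp add: ennreal_plus ennreal_mult)
    finally show "ennreal (P * (\<epsilon> + K0_bound SqType n c (c0 + d * sqrt (S y))))
        \<le> ennreal A + ennreal B * ennreal (S y)" .
  qed
  also have "\<dots> = (\<integral>\<^sup>+ y. ennreal A \<partial>M) + (\<integral>\<^sup>+ y. ennreal B * ennreal (S y) \<partial>M)"
    by (rule nn_integral_add) (use S(1) in auto)
  also have "\<dots> = ennreal A + ennreal B * (\<integral>\<^sup>+ y. ennreal (S y) \<partial>M)"
    using S(1) by (simp add: nn_integral_cmult emeasure_space_1)
  also have "\<dots> < \<infinity>" using S(3) by (simp add: ennreal_mult_less_top less_top)
  finally show ?thesis .
qed

lemma nn_integral_pair_measure_fst:
  assumes "prob_space M2" and f: "f \<in> borel_measurable M1"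
  shows "(\<integral>\<^sup>+ p. f (fst p) \<partial>(M1 \<Otimes>\<^sub>M M2)) = (\<integral>\<^sup>+ x. f x \<partial>M1)"
proof -
  interpret M2: prob_space M2 by fact
  have "(\<integral>\<^sup>+ p. f (fst p) \<partial>(M1 \<Otimes>\<^sub>M M2)) = (\<integral>\<^sup>+ x. \<integral>\<^sup>+ y. f (fst (x, y)) \<partial>M2 \<partial>M1)"
    by (rule M2.nn_integral_fst[symmetric]) (use f in measurable)
  then show ?thesis by (simp add: M2.emeasure_space_1)
qed

lemma borel_measurable_K0_bound [measurable]: "K0_bound ty n c \<in> borel_measurable borel"
  unfolding K0_bound_def by (cases ty) auto

lemma nn_integral_K0_bound_SqType_Psi_finite:
  assumes M: "prob_space M" and P: "0 \<le> P" and \<epsilon>: "0 \<le> \<epsilon>"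
  shows "(\<integral>\<^sup>+ p. ennreal (P * (\<epsilon> + K0_bound SqType n c
      (c0 + d * sqrt (Psi Ng \<beta> N (fst p) \<bullet> Psi Ng \<beta> N (fst p))))) \<partial>(gauss Ng \<Otimes>\<^sub>M M)) < \<infinity>"
proof -
  define S where "S y = Psi Ng \<beta> N y \<bullet> Psi Ng \<beta> N y" for y
  define F where "F y = ennreal (P * (\<epsilon> + K0_bound SqType n c (c0 + d * sqrt (S y))))" for y
  have S: "S \<in> borel_measurable (gauss Ng)" "\<And>y. 0 \<le> S y" "(\<integral>\<^sup>+ y. ennreal (S y) \<partial>gauss Ng) < \<infinity>"
    unfolding S_def by (rule borel_measurable_Psi_norm, simp add: scalar_prod_self_eq_sum[OF Psi_carrier]
        sum_nonneg, rule nn_integral_Psi_norm_finite)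
  have "(\<integral>\<^sup>+ p. F (fst p) \<partial>(gauss Ng \<Otimes>\<^sub>M M)) = (\<integral>\<^sup>+ y. F y \<partial>gauss Ng)"
    by (rule nn_integral_pair_measure_fst[OF M]) (use S(1) in \<open>simp add: F_def\<close>)
  also have "\<dots> < \<infinity>"
    unfolding F_def by (rule nn_integral_K0_bound_SqType_finite[OF prob_space_gauss S P \<epsilon>])
  finally show ?thesis unfolding F_def S_def .
qed

section \<open>Uniform constants from the hypotheses\<close>

lemma uniform_quadratic_growth_bound:
  fixes h :: "real \<Rightarrow> real \<Rightarrow> real" and a :: "nat \<Rightarrow> real"
  assumes "\<forall>j<n. (\<forall>g. 0 \<le> h g (a j)) \<and> (\<exists>ca ch. 0 < ca \<and> 0 < ch \<and> (\<forall>g. h g (a j) \<le> ca + ch * g\<^sup>2))"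
  shows "\<exists>c\<ge>0. \<forall>j<n. \<forall>t. 0 \<le> h t (a j) \<and> h t (a j) \<le> c * (1 + t\<^sup>2)"
proof -
  have "\<forall>j\<in>{..<n}. \<exists>cc. 0 \<le> cc \<and> (\<forall>t. h t (a j) \<le> cc * (1 + t\<^sup>2))"
  proof
    fix j assume "j \<in> {..<n}"
    then obtain ca ch where cc: "0 < ca" "0 < ch" "\<forall>g. h g (a j) \<le> ca + ch * g\<^sup>2"
      using assms by blast
    have "h t (a j) \<le> (ca + ch) * (1 + t\<^sup>2)" for t
    proof -
      have "(ca + ch) * (1 + t\<^sup>2) = ca + ch + ca * t\<^sup>2 + ch * t\<^sup>2" by (simp add: algebra_simps)
      moreover have "0 \<le> ca * t\<^sup>2" using cc(1) by simp
      ultimately show ?thesis using cc(2) cc(3)[rule_format, of t] by linarith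
    qed
    then show "\<exists>cc. 0 \<le> cc \<and> (\<forall>t. h t (a j) \<le> cc * (1 + t\<^sup>2))"
      using cc(1,2) by (intro exI[of _ "ca + ch"]) simp
  qed
  from bchoice[OF this] obtain cc
    where cc: "\<forall>j\<in>{..<n}. 0 \<le> cc j \<and> (\<forall>t. h t (a j) \<le> cc j * (1 + t\<^sup>2))"
    by blast
  have "h t (a j) \<le> (\<Sum>j<n. cc j) * (1 + t\<^sup>2)" if "j < n" for j t
  proof -
    have "cc j \<le> (\<Sum>j<n. cc j)" using cc that by (intro member_le_sum) auto
    then have "cc j * (1 + t\<^sup>2) \<le> (\<Sum>j<n. cc j) * (1 + t\<^sup>2)" by (rule mult_right_mono) simp
    moreover have "h t (a j) \<le> cc j * (1 + t\<^sup>2)" using cc that by simp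
    ultimately show ?thesis by linarith
  qed
  moreover have "0 \<le> (\<Sum>j<n. cc j)" using cc by (intro sum_nonneg) auto
  ultimately show ?thesis using assms by blast
qed

lemma Linf_mat_AE_frob_le:
  assumes "Linf_mat n D H"
  shows "\<exists>c. AE x in lebesgue_on D. frob (H x) \<le> c"
proof -
  define E where "E = esssup (lebesgue_on D) (\<lambda>x. ereal (frob (H x)))"
  have "E < \<infinity>" using assms unfolding Linf_mat_def E_def by simp
  have "AE x in lebesgue_on D. ereal (frob (H x)) \<le> E" unfolding E_def by (rule esssup_AE)
  then have "AE x in lebesgue_on D. frob (H x) \<le> real_of_ereal E"
    by eventually_elim (use \<open>E < \<infinity>\<close> in \<open>cases E; auto\<close>)
  then show ?thesis by blast
qed

lemma Linf_mat_family_AE_frob_le: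
  assumes "Linf_mat n D G0" "\<forall>i\<in>I. Linf_mat n D (G i)" "finite I"
  shows "\<exists>c0 cg. AE x in lebesgue_on D. frob (G0 x) \<le> c0 \<and> (\<forall>i\<in>I. frob (G i x) \<le> cg i)"
proof -
  obtain c0 where c0: "AE x in lebesgue_on D. frob (G0 x) \<le> c0"
    using Linf_mat_AE_frob_le[OF assms(1)] by blast
  have "\<forall>i\<in>I. \<exists>c. AE x in lebesgue_on D. frob (G i x) \<le> c"
    using assms(2) by (intro ballI Linf_mat_AE_frob_le) blast
  from bchoice[OF this] obtain cg where "\<forall>i\<in>I. AE x in lebesgue_on D. frob (G i x) \<le> cg i"
    by blast
  then have "AE x in lebesgue_on D. \<forall>i\<in>I. frob (G i x) \<le> cg i"
    by (subst AE_finite_all[OF assms(3)])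
  with c0 have "AE x in lebesgue_on D. frob (G0 x) \<le> c0 \<and> (\<forall>i\<in>I. frob (G i x) \<le> cg i)"
    by eventually_elim blast
  then show ?thesis by blast
qed

theorem lemma7:
  fixes D :: "'d::euclidean_space set"
    and n m N Ng :: nat
    and K L G0 :: "'d \<Rightarrow> real mat"
    and G :: "nat \<Rightarrow> 'd \<Rightarrow> real mat"
    and \<sigma> :: "nat \<Rightarrow> real"
    and k0 k1 \<epsilon> :: real
    and \<beta> :: "nat \<Rightarrow> nat \<Rightarrow> nat"
    and h :: "real \<Rightarrow> real \<Rightarrow> real"
    and a :: "nat \<Rightarrow> real"
    and A :: "real mat"
    and Mp :: "(nat \<Rightarrow> real) \<Rightarrow> real mat"
    and G\<nu> :: "(nat \<Rightarrow> real) measure"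
    and ty :: ktype
  assumes n: "1 \<le> n"
    and D: "bounded D" "open D"
    and k0k1: "0 < k0" "k0 < k1"
    and K: "\<forall>x\<in>D. K x \<in> carrier_mat n n \<and>
              (\<forall>v\<in>carrier_vec n. k0 * (v \<bullet> v) \<le> (K x *\<^sub>v v) \<bullet> v
                                  \<and> (K x *\<^sub>v v) \<bullet> v \<le> k1 / sqrt (real n) * (v \<bullet> v))"
    and L: "\<forall>x\<in>D. L x \<in> carrier_mat n n \<and> upper_triangular (L x) \<and> K x = transpose_mat (L x) * L x"
    and L_meas: "mat_measurable n (lebesgue_on D) L"
    and eps: "0 < \<epsilon>"
    and G0: "sym_field n D G0" "Linf_mat n D G0"
    and Gi: "\<forall>i\<ge>1. sym_field n D (G i) \<and> Linf_mat n D (G i)"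
    and sigma: "\<forall>i\<ge>1. 0 < \<sigma> i \<and> \<sigma> (Suc i) \<le> \<sigma> i"
    and mN: "1 \<le> m" "m \<le> N" "1 \<le> Ng"
    and beta: "\<forall>j<N. (\<forall>k\<ge>Ng. \<beta> j k = 0) \<and> (\<exists>k<Ng. \<beta> j k \<noteq> 0)" "inj_on \<beta> {..<N}"
    and a: "\<forall>j<n. 0 < a j"
    and h: "\<forall>j<n. strict_mono (\<lambda>g. h g (a j)) \<and> (\<forall>g. 0 \<le> h g (a j))
              \<and> (\<exists>ca ch. 0 < ca \<and> 0 < ch \<and> (\<forall>g. h g (a j) \<le> ca + ch * g\<^sup>2))"
    and A: "A \<in> stiefel N m"
    and Mp: "\<forall>z\<in>space (PiM {..<m*N - m*(m+1) div 2} (\<lambda>_. lborel)).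
               Mp z \<in> stiefel N m \<and> stiefel_exp_form N m A (Mp z)"
    and Mp0: "Mp (restrict (\<lambda>_. 0) {..<m*N - m*(m+1) div 2}) = A"
    and G\<nu>: "prob_space G\<nu>" "sets G\<nu> = sets (PiM {..<m*N - m*(m+1) div 2} (\<lambda>_. lborel))"
  shows "\<exists>\<alpha> (\<gamma> :: (nat \<Rightarrow> real) \<times> (nat \<Rightarrow> real) \<Rightarrow> real).
     \<gamma> \<in> borel_measurable (gauss Ng \<Otimes>\<^sub>M G\<nu>) \<and> (\<forall>p\<in>space (gauss Ng \<Otimes>\<^sub>M G\<nu>). 0 < \<gamma> p) \<and> 0 < \<alpha> \<and>
     (AE p in gauss Ng \<Otimes>\<^sub>M G\<nu>.
        ereal \<alpha> \<le> essinf (lebesgue_on D)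
            (\<lambda>x. rayleigh_inf n (K_mN ty n h a \<epsilon> L G0 G \<sigma> (Psi Ng \<beta> N) m x (fst p) (Mp (snd p))))
      \<and> esssup (lebesgue_on D)
            (\<lambda>x. rayleigh_sup n (K_mN ty n h a \<epsilon> L G0 G \<sigma> (Psi Ng \<beta> N) m x (fst p) (Mp (snd p))))
          \<le> ereal (\<gamma> p)) \<and>
     (ty = SqType \<longrightarrow> (\<integral>\<^sup>+ p. ennreal (\<gamma> p) \<partial>(gauss Ng \<Otimes>\<^sub>M G\<nu>)) < \<infinity>)"
proof -
  obtain c where c: "0 \<le> c" "\<forall>j<n. \<forall>t. 0 \<le> h t (a j) \<and> h t (a j) \<le> c * (1 + t\<^sup>2)"
    using uniform_quadratic_growth_bound[of n h a] h by blast
  obtain c0 cg where frob: "AE x in lebesgue_on D. frob (G0 x) \<le> c0 \<and> (\<forall>i\<in>{1..m}. frob (G i x) \<le> cg i)"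
    using Linf_mat_family_AE_frob_le[OF G0(2), of "{1..m}" G] Gi by force
  define P where "P = real n ^ 3 * (k1 / sqrt n) / (1 + \<epsilon>)"
  define \<gamma> where "\<gamma> p = P * (\<epsilon> + K0_bound ty n c (c0 + (\<Sum>i=1..m. sqrt (\<sigma> i) * cg i)
      * sqrt (Psi Ng \<beta> N (fst p) \<bullet> Psi Ng \<beta> N (fst p))))" for p :: "(nat \<Rightarrow> real) \<times> (nat \<Rightarrow> real)"
  have P: "0 < P" unfolding P_def using n k0k1 eps by simp
  have "0 \<le> k1" using k0k1 by simp
  moreover have "\<forall>x\<in>D. L x \<in> carrier_mat n n \<and> K x = transpose_mat (L x) * L x"
    and "\<forall>i\<in>{1..m}. sym_field n D (G i) \<and> mat_measurable n (lebesgue_on D) (G i)"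
    and "\<forall>i\<in>{1..m}. 0 \<le> \<sigma> i"
    and "mat_measurable n (lebesgue_on D) G0"
    using L Gi sigma G0(2) by (auto simp: Linf_mat_def less_imp_le)
  moreover have "\<forall>j<n. (\<lambda>g. h g (a j)) \<in> borel_measurable borel"
    using h by (auto intro!: borel_measurable_mono strict_mono_mono)
  ultimately have "AE p in gauss Ng \<Otimes>\<^sub>M G\<nu>. ereal (\<epsilon> * k0 / (1 + \<epsilon>)) \<le> essinf (lebesgue_on D)
            (\<lambda>x. rayleigh_inf n (K_mN ty n h a \<epsilon> L G0 G \<sigma> (Psi Ng \<beta> N) m x (fst p) (Mp (snd p))))
      \<and> esssup (lebesgue_on D)
            (\<lambda>x. rayleigh_sup n (K_mN ty n h a \<epsilon> L G0 G \<sigma> (Psi Ng \<beta> N) m x (fst p) (Mp (snd p))))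
          \<le> ereal (\<gamma> p)"
    unfolding \<gamma>_def P_def
    using K_mN_essential_rayleigh_bounds[where h = h and a = a and \<Psi> = "Psi Ng \<beta> N",
        OF space_lebesgue_on eps _ K _ L_meas G0(1) _ _ frob _ _ c _ Psi_carrier]
      Mp sets_eq_imp_space_eq[OF G\<nu>(2)]
    by (intro AE_I2) (auto simp: space_pair_measure)
  moreover have "\<gamma> \<in> borel_measurable (gauss Ng \<Otimes>\<^sub>M G\<nu>)" unfolding \<gamma>_def by measurable
  moreover have "0 < \<gamma> p" for p
    unfolding \<gamma>_def using P eps K0_bound_nonneg by (intro mult_pos_pos add_pos_nonneg)
  moreover have "ty = SqType \<Longrightarrow> (\<integral>\<^sup>+ p. ennreal (\<gamma> p) \<partial>(gauss Ng \<Otimes>\<^sub>M G\<nu>)) < \<infinity>"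
    unfolding \<gamma>_def using nn_integral_K0_bound_SqType_Psi_finite[OF G\<nu>(1)] P eps by simp
  moreover have "0 < \<epsilon> * k0 / (1 + \<epsilon>)" using eps k0k1 by simp
  ultimately show ?thesis by blast
qed

end
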